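(* Let $(M_t)_{t\ge0}$, $(N_t)_{t\ge0}$ be $d$-dimensional processes with independent increments on sublinear expectation spaces $(\Omega_1,\mathcal{H}_1,\hat{\mathbb{E}}_1)$, $(\Omega_2,\mathcal{H}_2,\hat{\mathbb{E}}_2)$ satisfying condition (A) of the context. Let $\Omega=\Omega_1\times\Omega_2$, and for $\omega=(\omega_1,\omega_2)$ and $t\in[0,1]$ put $\tilde M_t(\omega)=M_t(\omega_1)$, $\tilde N_t(\omega)=N_t(\omega_2)$, $X_t=(\tilde M_t,\tilde N_t)$. Fix $n\ge1$, $\delta_n=2^{-n}$, let $\mathcal{H}^n=\{\varphi(X_{\delta_n},X_{2\delta_n}-X_{\delta_n},\dots,X_{2^n\delta_n}-X_{(2^n-1)\delta_n}):\varphi\in C_{b.Lip}(\mathbb{R}^{2^n\times2d})\}$, and define $\hat{\mathbb{E}}^n:\mathcal{H}^n\to\mathbb{R}$ as follows. Step 1: for $k\le 2^n$ and $\phi\in C_{b.Lip}(\mathbb{R}^{2d})$, $\hat{\mathbb{E}}^n[\phi(X_{k\delta_n}-X_{(k-1)\delta_n})]=\hat{\mathbb{E}}_1[\psi(M_{k\delta_n}-M_{(k-1)\delta_n})]$ where $\psi(x)=\hat{\mathbb{E}}_2[\phi(x,N_{k\delta_n}-N_{(k-1)\delta_n})]$, $x\in\mathbb{R}^d$. Step 2: for $\varphi\in C_{b.Lip}(\mathbb{R}^{2^n\times2d})$, $\hat{\mathbb{E}}^n[\varphi(X_{\delta_n},\dots,X_{2^n\delta_n}-X_{(2^n-1)\delta_n})]=\varphi_0$,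 where $\varphi_{2^n}=\varphi$ and, backwards for $k=2^n,\dots,1$, $\varphi_{k-1}(x_1,\dots,x_{k-1})=\hat{\mathbb{E}}^n[\varphi_k(x_1,\dots,x_{k-1},X_{k\delta_n}-X_{(k-1)\delta_n})]$ computed by Step 1. Then: (1) $(\Omega,\mathcal{H}^n,\hat{\mathbb{E}}^n)$ is a sublinear expectation space; (2) for each $2\le k\le 2^n$, $X_{k\delta_n}-X_{(k-1)\delta_n}$ is independent from $(X_{\delta_n},\dots,X_{(k-1)\delta_n}-X_{(k-2)\delta_n})$ under $\hat{\mathbb{E}}^n$; (3) $(\tilde M_{\delta_n},\tilde M_{2\delta_n}-\tilde M_{\delta_n},\dots,\tilde M_{2^n\delta_n}-\tilde M_{(2^n-1)\delta_n})$ under $\hat{\mathbb{E}}^n$ has the same distribution as $(M_{\delta_n},M_{2\delta_n}-M_{\delta_n},\dots,M_{2^n\delta_n}-M_{(2^n-1)\delta_n})$ under $\hat{\mathbb{E}}_1$, and likewise $(\tilde N_{\delta_n},\dots,\tilde N_{2^n\delta_n}-\tilde N_{(2^n-1)\delta_n})\overset{d}{=}(N_{\delta_n},\dots,N_{2^n\delta_n}-N_{(2^n-1)\delta_n})$.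
   Context: $C_{b.Lip}(\mathbb{R}^d)$: bounded Lipschitz functions. A sublinear expectation space $(\Omega,\mathcal{H},\hat{\mathbb{E}})$: $\mathcal{H}$ is a linear space of real functions on $\Omega$ closed under composition with $C_{b.Lip}$ functions, and $\hat{\mathbb{E}}:\mathcal{H}\to\mathbb{R}$ is monotone, constant preserving, subadditive, positively homogeneous. A sublinear $\tilde{\mathbb{E}}$ dominates $\hat{\mathbb{E}}$ if $\hat{\mathbb{E}}[X]-\hat{\mathbb{E}}[Y]\le\tilde{\mathbb{E}}[X-Y]$. Condition (A): there exist sublinear expectations $\tilde{\mathbb{E}}_i$ on $\mathcal{H}_i$ dominating $\hat{\mathbb{E}}_i$ ($i=1,2$) with $\lim_{s\to t}(\tilde{\mathbb{E}}_1[|M_s-M_t|]+\tilde{\mathbb{E}}_2[|N_s-N_t|])=0$ for each $t\ge0$. $Y$ is independent from $X$ under $\hat{\mathbb{E}}$ if $\hat{\mathbb{E}}[\varphi(X,Y)]=\hat{\mathbb{E}}[\hat{\mathbb{E}}[\varphi(x,Y)]_{x=X}]$ for all bounded Lipschitz $\varphi$. A process with $X_0=0$ has independent increments if for all $t_1<\dots<t_n$, $X_{t_n}-X_{t_{n-1}}$ is independent from $(X_{t_1},\dots,X_{t_{n-1}})$. $\overset{d}{=}$ means equal expectations of $\varphi(\cdot)$ for all bounded Lipschitz $\varphi$. *)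

theory Defs
  imports "HOL-Analysis.Analysis"
begin

text \<open>Vectors in R^I are functions I => real (only coordinates in the finite index set I matter).
  R^m is the index set {..<m}; R^(K x D) is {..<K} x {..<D}.\<close>

definition vnorm :: "'i set \<Rightarrow> ('i \<Rightarrow> real) \<Rightarrow> real" where
  "vnorm I x = sqrt (\<Sum>i\<in>I. (x i)\<^sup>2)"

definition cblip :: "'i set \<Rightarrow> (('i \<Rightarrow> real) \<Rightarrow> real) \<Rightarrow> bool" where
  "cblip I \<phi> \<longleftrightarrow> (\<exists>B. \<forall>x. \<bar>\<phi> x\<bar> \<le> B) \<and>
     (\<exists>L. \<forall>x y. \<bar>\<phi> x - \<phi> y\<bar> \<le> L * vnorm I (\<lambda>i. x i - y i))"

definition sublinear_expectation :: "('w \<Rightarrow> real) set \<Rightarrow> (('w \<Rightarrow> real) \<Rightarrow> real) \<Rightarrow> bool" where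
  "sublinear_expectation H E \<longleftrightarrow>
     (\<forall>X\<in>H. \<forall>Y\<in>H. (\<forall>w. Y w \<le> X w) \<longrightarrow> E Y \<le> E X) \<and>
     (\<forall>c. E (\<lambda>_. c) = c) \<and>
     (\<forall>X\<in>H. \<forall>Y\<in>H. E (\<lambda>w. X w + Y w) \<le> E X + E Y) \<and>
     (\<forall>l::real. \<forall>X\<in>H. l \<ge> 0 \<longrightarrow> E (\<lambda>w. l * X w) = l * E X)"

definition sublinear_expectation_space :: "('w \<Rightarrow> real) set \<Rightarrow> (('w \<Rightarrow> real) \<Rightarrow> real) \<Rightarrow> bool" where
  "sublinear_expectation_space H E \<longleftrightarrow>
     (\<lambda>_. 0) \<in> H \<and> (\<forall>X\<in>H. \<forall>Y\<in>H. (\<lambda>w. X w + Y w) \<in> H) \<and>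
     (\<forall>c::real. \<forall>X\<in>H. (\<lambda>w. c * X w) \<in> H) \<and>
     (\<forall>(n::nat) (X::nat \<Rightarrow> 'w \<Rightarrow> real) \<phi>. (\<forall>i<n. X i \<in> H) \<and> cblip {..<n} \<phi> \<longrightarrow>
         (\<lambda>w. \<phi> (\<lambda>i. X i w)) \<in> H) \<and>
     sublinear_expectation H E"

definition dominates :: "('w \<Rightarrow> real) set \<Rightarrow> (('w \<Rightarrow> real) \<Rightarrow> real) \<Rightarrow> (('w \<Rightarrow> real) \<Rightarrow> real) \<Rightarrow> bool" where
  "dominates H Et E \<longleftrightarrow> (\<forall>X\<in>H. \<forall>Y\<in>H. E X - E Y \<le> Et (\<lambda>w. X w - Y w))"

text \<open>Y (valued in R^J) is independent from X (valued in R^I) under E.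
  A pair (x,y) in R^(I+J) is encoded as case_sum x y.\<close>
definition indep :: "(('w \<Rightarrow> real) \<Rightarrow> real) \<Rightarrow> 'i set \<Rightarrow> 'j set \<Rightarrow>
    ('w \<Rightarrow> 'i \<Rightarrow> real) \<Rightarrow> ('w \<Rightarrow> 'j \<Rightarrow> real) \<Rightarrow> bool" where
  "indep E I J X Y \<longleftrightarrow> (\<forall>\<phi>. cblip (I <+> J) \<phi> \<longrightarrow>
     E (\<lambda>w. \<phi> (case_sum (X w) (Y w))) = E (\<lambda>w. E (\<lambda>w'. \<phi> (case_sum (X w) (Y w')))))"

definition process_in :: "('w \<Rightarrow> real) set \<Rightarrow> nat \<Rightarrow> (real \<Rightarrow> 'w \<Rightarrow> nat \<Rightarrow> real) \<Rightarrow> bool" where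
  "process_in H d M \<longleftrightarrow> (\<forall>t\<ge>0. \<forall>i<d. (\<lambda>w. M t w i) \<in> H)"

definition indep_increments :: "(('w \<Rightarrow> real) \<Rightarrow> real) \<Rightarrow> nat \<Rightarrow> (real \<Rightarrow> 'w \<Rightarrow> nat \<Rightarrow> real) \<Rightarrow> bool" where
  "indep_increments E d M \<longleftrightarrow> (\<forall>w. \<forall>i<d. M 0 w i = 0) \<and>
     (\<forall>(m::nat) (t::nat \<Rightarrow> real). m \<ge> 1 \<and> 0 \<le> t 0 \<and> (\<forall>j<m. t j < t (Suc j)) \<longrightarrow>
        indep E ({..<m} \<times> {..<d}) {..<d}
          (\<lambda>w (j, i). M (t j) w i) (\<lambda>w i. M (t m) w i - M (t (m - 1)) w i))"

definition condition_A :: "('a \<Rightarrow> real) set \<Rightarrow> (('a \<Rightarrow> real) \<Rightarrow> real) \<Rightarrow>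
    ('b \<Rightarrow> real) set \<Rightarrow> (('b \<Rightarrow> real) \<Rightarrow> real) \<Rightarrow> nat \<Rightarrow>
    (real \<Rightarrow> 'a \<Rightarrow> nat \<Rightarrow> real) \<Rightarrow> (real \<Rightarrow> 'b \<Rightarrow> nat \<Rightarrow> real) \<Rightarrow> bool" where
  "condition_A H1 E1 H2 E2 d M N \<longleftrightarrow> (\<exists>Et1 Et2.
     sublinear_expectation H1 Et1 \<and> dominates H1 Et1 E1 \<and>
     sublinear_expectation H2 Et2 \<and> dominates H2 Et2 E2 \<and>
     (\<forall>s\<ge>0. \<forall>t\<ge>0. (\<lambda>w. vnorm {..<d} (\<lambda>i. M s w i - M t w i)) \<in> H1 \<and>
                     (\<lambda>w. vnorm {..<d} (\<lambda>i. N s w i - N t w i)) \<in> H2) \<and>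
     (\<forall>t\<ge>0. ((\<lambda>s. Et1 (\<lambda>w. vnorm {..<d} (\<lambda>i. M s w i - M t w i)) +
                 Et2 (\<lambda>w. vnorm {..<d} (\<lambda>i. N s w i - N t w i))) \<longlongrightarrow> 0) (at t within {0..})))"

definition dlt :: "nat \<Rightarrow> real" where "dlt n = 1 / 2 ^ n"

definition Xproc :: "nat \<Rightarrow> (real \<Rightarrow> 'a \<Rightarrow> nat \<Rightarrow> real) \<Rightarrow> (real \<Rightarrow> 'b \<Rightarrow> nat \<Rightarrow> real) \<Rightarrow>
    real \<Rightarrow> 'a \<times> 'b \<Rightarrow> nat \<Rightarrow> real" where
  "Xproc d M N t \<omega> = (\<lambda>i. if i < d then M t (fst \<omega>) i else N t (snd \<omega>) (i - d))"

text \<open>j-th increment (0-indexed): P_{(j+1) delta_n} - P_{j delta_n}.\<close>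
definition incr :: "nat \<Rightarrow> (real \<Rightarrow> 'w \<Rightarrow> nat \<Rightarrow> real) \<Rightarrow> nat \<Rightarrow> 'w \<Rightarrow> nat \<Rightarrow> real" where
  "incr n P j w = (\<lambda>i. P (real (Suc j) * dlt n) w i - P (real j * dlt n) w i)"

definition Mtil :: "(real \<Rightarrow> 'a \<Rightarrow> nat \<Rightarrow> real) \<Rightarrow> real \<Rightarrow> 'a \<times> 'b \<Rightarrow> nat \<Rightarrow> real" where
  "Mtil M t \<omega> = M t (fst \<omega>)"

definition Ntil :: "(real \<Rightarrow> 'b \<Rightarrow> nat \<Rightarrow> real) \<Rightarrow> real \<Rightarrow> 'a \<times> 'b \<Rightarrow> nat \<Rightarrow> real" where
  "Ntil N t \<omega> = N t (snd \<omega>)"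

definition step1 :: "(('a \<Rightarrow> real) \<Rightarrow> real) \<Rightarrow> (('b \<Rightarrow> real) \<Rightarrow> real) \<Rightarrow> nat \<Rightarrow>
    (real \<Rightarrow> 'a \<Rightarrow> nat \<Rightarrow> real) \<Rightarrow> (real \<Rightarrow> 'b \<Rightarrow> nat \<Rightarrow> real) \<Rightarrow> nat \<Rightarrow> nat \<Rightarrow>
    ((nat \<Rightarrow> real) \<Rightarrow> real) \<Rightarrow> real" where
  "step1 E1 E2 d M N n j \<phi> =
     (let \<psi> = (\<lambda>x. E2 (\<lambda>w2. \<phi> (\<lambda>i. if i < d then x i else incr n N j w2 (i - d))))
      in E1 (\<lambda>w1. \<psi> (incr n M j w1)))"

definition rowupd :: "(nat \<times> nat \<Rightarrow> real) \<Rightarrow> nat \<Rightarrow> (nat \<Rightarrow> real) \<Rightarrow> nat \<times> nat \<Rightarrow> real" where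
  "rowupd x r y = (\<lambda>(j, i). if j = r then y i else x (j, i))"

text \<open>Step 2: backward recursion. bwd ... m phi = phi_{2^n - m}, a function of the matrix
  (x_1,...,x_{2^n}) (rows 0..2^n-1) depending only on the first 2^n - m rows.\<close>
fun bwd :: "(('a \<Rightarrow> real) \<Rightarrow> real) \<Rightarrow> (('b \<Rightarrow> real) \<Rightarrow> real) \<Rightarrow> nat \<Rightarrow>
    (real \<Rightarrow> 'a \<Rightarrow> nat \<Rightarrow> real) \<Rightarrow> (real \<Rightarrow> 'b \<Rightarrow> nat \<Rightarrow> real) \<Rightarrow> nat \<Rightarrow>
    ((nat \<times> nat \<Rightarrow> real) \<Rightarrow> real) \<Rightarrow> nat \<Rightarrow> (nat \<times> nat \<Rightarrow> real) \<Rightarrow> real" where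
  "bwd E1 E2 d M N n \<phi> 0 = \<phi>"
| "bwd E1 E2 d M N n \<phi> (Suc m) = (\<lambda>x.
     step1 E1 E2 d M N n (2 ^ n - Suc m)
       (\<lambda>y. bwd E1 E2 d M N n \<phi> m (rowupd x (2 ^ n - Suc m) y)))"

definition val_n :: "(('a \<Rightarrow> real) \<Rightarrow> real) \<Rightarrow> (('b \<Rightarrow> real) \<Rightarrow> real) \<Rightarrow> nat \<Rightarrow>
    (real \<Rightarrow> 'a \<Rightarrow> nat \<Rightarrow> real) \<Rightarrow> (real \<Rightarrow> 'b \<Rightarrow> nat \<Rightarrow> real) \<Rightarrow> nat \<Rightarrow>
    ((nat \<times> nat \<Rightarrow> real) \<Rightarrow> real) \<Rightarrow> real" where
  "val_n E1 E2 d M N n \<phi> = bwd E1 E2 d M N n \<phi> (2 ^ n) (\<lambda>_. 0)"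

definition incmat :: "nat \<Rightarrow> (real \<Rightarrow> 'a \<Rightarrow> nat \<Rightarrow> real) \<Rightarrow> (real \<Rightarrow> 'b \<Rightarrow> nat \<Rightarrow> real) \<Rightarrow>
    nat \<Rightarrow> 'a \<times> 'b \<Rightarrow> nat \<times> nat \<Rightarrow> real" where
  "incmat d M N n \<omega> = (\<lambda>(j, i). incr n (Xproc d M N) j \<omega> i)"

definition H_n :: "nat \<Rightarrow> (real \<Rightarrow> 'a \<Rightarrow> nat \<Rightarrow> real) \<Rightarrow> (real \<Rightarrow> 'b \<Rightarrow> nat \<Rightarrow> real) \<Rightarrow>
    nat \<Rightarrow> ('a \<times> 'b \<Rightarrow> real) set" where
  "H_n d M N n = {(\<lambda>\<omega>. \<phi> (incmat d M N n \<omega>)) | \<phi>. cblip ({..<2 ^ n} \<times> {..<2 * d}) \<phi>}"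

definition E_n :: "(('a \<Rightarrow> real) \<Rightarrow> real) \<Rightarrow> (('b \<Rightarrow> real) \<Rightarrow> real) \<Rightarrow> nat \<Rightarrow>
    (real \<Rightarrow> 'a \<Rightarrow> nat \<Rightarrow> real) \<Rightarrow> (real \<Rightarrow> 'b \<Rightarrow> nat \<Rightarrow> real) \<Rightarrow> nat \<Rightarrow>
    ('a \<times> 'b \<Rightarrow> real) \<Rightarrow> real" where
  "E_n E1 E2 d M N n \<xi> = val_n E1 E2 d M N n
     (SOME \<phi>. cblip ({..<2 ^ n} \<times> {..<2 * d}) \<phi> \<and> \<xi> = (\<lambda>\<omega>. \<phi> (incmat d M N n \<omega>)))"

end

theory Submission
  imports Defs
begin

text \<open>Step 1 composes the sublinear expectations \<open>E2\<close> and \<open>E1\<close>, so it is a sublinear operator on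
  bounded Lipschitz functions, and Step 2, a backward iteration of Step 1 over the rows of the
  increment matrix, inherits monotonicity, constant preservation, subadditivity and positive
  homogeneity. If the integrand only sees the \<open>M\<close>-columns (or only the \<open>N\<close>-columns), the
  independence of the increments of \<open>M\<close> (of \<open>N\<close>) collapses the iteration into a single
  expectation under \<open>E1\<close> (under \<open>E2\<close>); this gives the marginal distributions. The subtle point
  is that the value of Step 2 depends only on the random variable, not on the representing
  function: if \<open>\<phi>\<close> and \<open>\<phi>'\<close> agree on the range of the increment matrix, then \<open>\<phi> - \<phi>'\<close> is
  dominated by a truncated distance to the range of the \<open>M\<close>-increments plus one to the range of
  the \<open>N\<close>-increments; each penalty sees one block of columns only, so its value is computed by
  the marginal formula and is zero, and subadditivity concludes. Independence of the \<open>j\<close>-th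
  increment holds because the iteration integrates row \<open>j\<close> out before it reaches the
  earlier rows.\<close>

section \<open>Functions of finitely many coordinates\<close>

definition depends_on :: "'i set \<Rightarrow> (('i \<Rightarrow> 'a) \<Rightarrow> 'b) \<Rightarrow> bool" where
  "depends_on S f \<longleftrightarrow> (\<forall>x y. (\<forall>c\<in>S. x c = y c) \<longrightarrow> f x = f y)"

lemma depends_onI: "(\<And>x y. (\<And>c. c \<in> S \<Longrightarrow> x c = y c) \<Longrightarrow> f x = f y) \<Longrightarrow> depends_on S f"
  unfolding depends_on_def by blast

lemma depends_onD: "depends_on S f \<Longrightarrow> (\<And>c. c \<in> S \<Longrightarrow> x c = y c) \<Longrightarrow> f x = f y"
  unfolding depends_on_def by blast

lemma depends_on_mono: "depends_on S f \<Longrightarrow> S \<subseteq> T \<Longrightarrow> depends_on T f"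
  unfolding depends_on_def by blast

lemma depends_on_Int:
  fixes f :: "('i \<Rightarrow> 'a) \<Rightarrow> 'b"
  assumes "depends_on S f" "depends_on T f"
  shows "depends_on (S \<inter> T) f"
proof (rule depends_onI)
  fix x y :: "'i \<Rightarrow> 'a" assume xy: "\<And>c. c \<in> S \<inter> T \<Longrightarrow> x c = y c"
  define z where "z = (\<lambda>c. if c \<in> S then x c else y c)"
  have "f x = f z" by (rule depends_onD[OF assms(1)]) (simp add: z_def)
  also have "f z = f y" by (rule depends_onD[OF assms(2)]) (use xy in \<open>auto simp: z_def\<close>)
  finally show "f x = f y" .
qed

lemma vnorm_nonneg: "0 \<le> vnorm I f"
  unfolding vnorm_def by (simp add: sum_nonneg)

lemma abs_le_vnorm: "finite I \<Longrightarrow> c \<in> I \<Longrightarrow> \<bar>f c\<bar> \<le> vnorm I f"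
  using member_le_L2_set[where A = I and i = c and f = "\<lambda>i. \<bar>f i\<bar>"] unfolding vnorm_def L2_set_def by simp

lemma vnorm_le_card_mult:
  assumes "finite I" "\<And>c. c \<in> I \<Longrightarrow> \<bar>f c\<bar> \<le> B"
  shows "vnorm I f \<le> real (card I) * B"
proof -
  have "vnorm I f \<le> (\<Sum>i\<in>I. \<bar>f i\<bar>)"
    using L2_set_le_sum_abs[where f = f and A = I] unfolding vnorm_def L2_set_def .
  also have "\<dots> \<le> (\<Sum>i\<in>I. B)" by (rule sum_mono) (use assms in auto)
  finally show ?thesis by simp
qed

lemma vnorm_mono: "(\<And>c. c \<in> I \<Longrightarrow> \<bar>f c\<bar> \<le> \<bar>g c\<bar>) \<Longrightarrow> vnorm I f \<le> vnorm I g"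
  unfolding vnorm_def by (intro real_sqrt_le_mono sum_mono) (simp add: abs_le_square_iff)

lemma vnorm_triangle: "vnorm I (\<lambda>i. f i + g i) \<le> vnorm I f + vnorm I g"
  using L2_set_triangle_ineq[where f = f and g = g and A = I] unfolding vnorm_def L2_set_def .

lemma vnorm_minus_commute: "vnorm I (\<lambda>c. y c - x c) = vnorm I (\<lambda>c. x c - y c)"
  unfolding vnorm_def by (simp add: power2_commute)

lemma cblipI:
  "(\<And>x. \<bar>f x\<bar> \<le> B) \<Longrightarrow> (\<And>x y. \<bar>f x - f y\<bar> \<le> L * vnorm I (\<lambda>i. x i - y i)) \<Longrightarrow> cblip I f"
  unfolding cblip_def by blast

lemma cblip_bounded:
  assumes "cblip I f" obtains B where "\<And>x. \<bar>f x\<bar> \<le> B"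
  using assms unfolding cblip_def by blast

lemma cblip_lipschitz:
  assumes "cblip I f"
  obtains L where "L \<ge> 0" "\<And>x y. \<bar>f x - f y\<bar> \<le> L * vnorm I (\<lambda>i. x i - y i)"
proof -
  obtain L where L: "\<And>x y. \<bar>f x - f y\<bar> \<le> L * vnorm I (\<lambda>i. x i - y i)"
    using assms unfolding cblip_def by blast
  have "\<bar>f x - f y\<bar> \<le> max L 0 * vnorm I (\<lambda>i. x i - y i)" for x y
    using L[of x y] mult_right_mono[OF max.cobounded1[of L 0] vnorm_nonneg[of I "\<lambda>i. x i - y i"]] by linarith
  then show ?thesis by (intro that[of "max L 0"]) auto
qed

lemma cblip_depends_on:
  fixes f :: "('i \<Rightarrow> real) \<Rightarrow> real"
  assumes "cblip I f" shows "depends_on I f"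
proof (rule depends_onI)
  obtain L where L: "\<And>x y. \<bar>f x - f y\<bar> \<le> L * vnorm I (\<lambda>i. x i - y i)"
    using assms unfolding cblip_def by blast
  fix x y :: "'i \<Rightarrow> real" assume "\<And>c. c \<in> I \<Longrightarrow> x c = y c"
  then have "vnorm I (\<lambda>i. x i - y i) = 0" by (simp add: vnorm_def)
  with L[of x y] show "f x = f y" by simp
qed

lemma cblip_const: "cblip I (\<lambda>_. c)"
  by (rule cblipI[of _ "\<bar>c\<bar>" 0]) auto

lemma cblip_compose:
  assumes "finite I" and f: "cblip I \<phi>"
    and g: "\<And>u u' c. c \<in> I \<Longrightarrow> \<bar>g u c - g u' c\<bar> \<le> C * vnorm J (\<lambda>j. u j - u' j)"
  shows "cblip J (\<lambda>u. \<phi> (g u))"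
proof -
  obtain B where B: "\<And>x. \<bar>\<phi> x\<bar> \<le> B" using cblip_bounded[OF f] by blast
  obtain L where L0: "L \<ge> 0" and L: "\<And>x y. \<bar>\<phi> x - \<phi> y\<bar> \<le> L * vnorm I (\<lambda>i. x i - y i)"
    using cblip_lipschitz[OF f] by blast
  show ?thesis
  proof (rule cblipI[of _ B "L * (real (card I) * C)"])
    fix u u'
    have "vnorm I (\<lambda>i. g u i - g u' i) \<le> real (card I) * (C * vnorm J (\<lambda>j. u j - u' j))"
      by (rule vnorm_le_card_mult[OF \<open>finite I\<close> g])
    from mult_left_mono[OF this L0] L[of "g u" "g u'"]
    show "\<bar>\<phi> (g u) - \<phi> (g u')\<bar> \<le> L * (real (card I) * C) * vnorm J (\<lambda>i. u i - u' i)"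
      by (simp add: algebra_simps)
  qed (rule B)
qed

lemma cblip_compose_family:
  assumes "finite I" and \<psi>: "cblip I \<psi>" and F: "\<And>i. i \<in> I \<Longrightarrow> cblip J (F i)"
  shows "cblip J (\<lambda>z. \<psi> (\<lambda>i. F i z))"
proof -
  have "\<forall>i\<in>I. \<exists>L. L \<ge> 0 \<and> (\<forall>x y. \<bar>F i x - F i y\<bar> \<le> L * vnorm J (\<lambda>c. x c - y c))"
    by (metis F cblip_lipschitz)
  then obtain L where L: "\<And>i. i \<in> I \<Longrightarrow> L i \<ge> 0"
    and lip: "\<And>i x y. i \<in> I \<Longrightarrow> \<bar>F i x - F i y\<bar> \<le> L i * vnorm J (\<lambda>c. x c - y c)"
    by (metis bchoice)
  show ?thesis
  proof (rule cblip_compose[OF \<open>finite I\<close> \<psi>, where C = "\<Sum>i\<in>I. L i"])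
    fix u u' c assume c: "c \<in> I"
    have "L c \<le> (\<Sum>i\<in>I. L i)" by (rule member_le_sum) (use c L \<open>finite I\<close> in auto)
    from mult_right_mono[OF this vnorm_nonneg[of J "\<lambda>j. u j - u' j"]] lip[OF c, of u u']
    show "\<bar>F c u - F c u'\<bar> \<le> (\<Sum>i\<in>I. L i) * vnorm J (\<lambda>j. u j - u' j)" by linarith
  qed
qed

lemma cblip_binop:
  assumes f: "cblip I f" and g: "cblip I g" and "K \<ge> 0"
    and h: "\<And>a b a' b'. \<bar>h a b - h a' b'\<bar> \<le> K * (\<bar>a - a'\<bar> + \<bar>b - b'\<bar>)"
  shows "cblip I (\<lambda>x. h (f x) (g x))"
proof -
  obtain B1 B2 where B1: "\<And>x. \<bar>f x\<bar> \<le> B1" and B2: "\<And>x. \<bar>g x\<bar> \<le> B2"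
    using cblip_bounded[OF f] cblip_bounded[OF g] by metis
  obtain L1 L2 where L1: "\<And>x y. \<bar>f x - f y\<bar> \<le> L1 * vnorm I (\<lambda>i. x i - y i)"
    and L2: "\<And>x y. \<bar>g x - g y\<bar> \<le> L2 * vnorm I (\<lambda>i. x i - y i)"
    using cblip_lipschitz[OF f] cblip_lipschitz[OF g] by metis
  show ?thesis
  proof (rule cblipI[of _ "\<bar>h 0 0\<bar> + K * (B1 + B2)" "K * (L1 + L2)"])
    fix x
    have "K * (\<bar>f x\<bar> + \<bar>g x\<bar>) \<le> K * (B1 + B2)"
      by (rule mult_left_mono) (use B1[of x] B2[of x] \<open>K \<ge> 0\<close> in auto)
    with h[of "f x" "g x" 0 0] show "\<bar>h (f x) (g x)\<bar> \<le> \<bar>h 0 0\<bar> + K * (B1 + B2)" by simp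
  next
    fix x y
    have "K * (\<bar>f x - f y\<bar> + \<bar>g x - g y\<bar>)
        \<le> K * (L1 * vnorm I (\<lambda>i. x i - y i) + L2 * vnorm I (\<lambda>i. x i - y i))"
      by (rule mult_left_mono) (use L1[of x y] L2[of x y] \<open>K \<ge> 0\<close> in auto)
    with h[of "f x" "g x" "f y" "g y"]
    show "\<bar>h (f x) (g x) - h (f y) (g y)\<bar> \<le> K * (L1 + L2) * vnorm I (\<lambda>i. x i - y i)"
      by (simp add: algebra_simps)
  qed
qed

lemma cblip_add: "cblip I f \<Longrightarrow> cblip I g \<Longrightarrow> cblip I (\<lambda>x. f x + g x)"
  by (rule cblip_binop[where K = 1]) auto

lemma cblip_min: "cblip I f \<Longrightarrow> cblip I g \<Longrightarrow> cblip I (\<lambda>x. min (f x) (g x))"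
  by (rule cblip_binop[where K = 1]) (auto simp: min_def)

lemma cblip_scale: "cblip I f \<Longrightarrow> cblip I (\<lambda>x. c * f x)"
  using cblip_binop[of I f f "\<bar>c\<bar>" "\<lambda>a b. c * a"]
  by (simp add: abs_mult right_diff_distrib[symmetric] mult_left_mono)

lemma cblip_change_index:
  assumes "finite I" "finite I'" and f: "cblip I f" and "depends_on S f" and "S \<inter> I \<subseteq> I'"
  shows "cblip I' f"
proof -
  have "cblip I' (\<lambda>x. f (\<lambda>c. if c \<in> S then x c else 0))"
  proof (rule cblip_compose[OF \<open>finite I\<close> f, where C = 1])
    fix u u' c assume "c \<in> I"
    with assms(5) abs_le_vnorm[OF \<open>finite I'\<close>, of c "\<lambda>j. u j - u' j"]
    show "\<bar>(if c \<in> S then u c else 0) - (if c \<in> S then u' c else 0)\<bar> \<le> 1 * vnorm I' (\<lambda>j. u j - u' j)"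
      by (auto simp: vnorm_nonneg)
  qed
  moreover have "(\<lambda>x. f (\<lambda>c. if c \<in> S then x c else 0)) = f"
    by (rule ext, rule depends_onD[OF \<open>depends_on S f\<close>]) auto
  ultimately show ?thesis by simp
qed

definition range_dist :: "'i set \<Rightarrow> ('w \<Rightarrow> 'i \<Rightarrow> real) \<Rightarrow> ('i \<Rightarrow> real) \<Rightarrow> real" where
  "range_dist I r z = (INF w. vnorm I (\<lambda>c. z c - r w c))"

lemma bdd_below_range_vnorm: "bdd_below (range (\<lambda>w. vnorm I (f w)))"
  by (rule bdd_belowI[where m = 0]) (auto simp: vnorm_nonneg)

lemma range_dist_nonneg: "0 \<le> range_dist I r z"
  unfolding range_dist_def by (rule cINF_greatest) (auto simp: vnorm_nonneg)

lemma range_dist_le: "range_dist I r z \<le> vnorm I (\<lambda>c. z c - r w c)"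
  unfolding range_dist_def by (rule cINF_lower[OF bdd_below_range_vnorm]) simp

lemma range_dist_self: "range_dist I r (r w) = 0"
  using range_dist_le[of I r "r w" w] range_dist_nonneg[of I r "r w"] by (simp add: vnorm_def)

lemma range_dist_lipschitz: "range_dist I r z \<le> range_dist I r z' + vnorm I (\<lambda>c. z c - z' c)"
proof -
  have "range_dist I r z - vnorm I (\<lambda>c. z c - z' c) \<le> range_dist I r z'"
    unfolding range_dist_def[of I r z']
  proof (rule cINF_greatest)
    fix w
    have "range_dist I r z \<le> vnorm I (\<lambda>c. (z' c - r w c) + (z c - z' c))"
      using range_dist_le[of I r z w] by simp
    also have "\<dots> \<le> vnorm I (\<lambda>c. z' c - r w c) + vnorm I (\<lambda>c. z c - z' c)"
      by (rule vnorm_triangle)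
    finally show "range_dist I r z - vnorm I (\<lambda>c. z c - z' c) \<le> vnorm I (\<lambda>c. z' c - r w c)"
      by simp
  qed simp
  then show ?thesis by simp
qed

lemma cblip_truncated_range_dist:
  assumes "L \<ge> 0"
  shows "cblip I (\<lambda>z. min B (L * range_dist I r z))"
proof (rule cblipI[where B = "\<bar>B\<bar>" and L = L])
  fix z
  show "\<bar>min B (L * range_dist I r z)\<bar> \<le> \<bar>B\<bar>"
    using mult_nonneg_nonneg[OF assms range_dist_nonneg[of I r z]] by (auto simp: min_def)
next
  fix z z'
  have "\<bar>range_dist I r z - range_dist I r z'\<bar> \<le> vnorm I (\<lambda>c. z c - z' c)"
    using range_dist_lipschitz[of I r z z'] range_dist_lipschitz[of I r z' z]
    by (auto simp: vnorm_minus_commute[of I z])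
  from mult_left_mono[OF this assms]
  have "\<bar>L * range_dist I r z - L * range_dist I r z'\<bar> \<le> L * vnorm I (\<lambda>c. z c - z' c)"
    using assms by (simp add: abs_mult right_diff_distrib[symmetric])
  moreover have "\<bar>min B a - min B b\<bar> \<le> \<bar>a - b\<bar>" for a b :: real
    by (auto simp: min_def)
  ultimately show "\<bar>min B (L * range_dist I r z) - min B (L * range_dist I r z')\<bar>
      \<le> L * vnorm I (\<lambda>i. z i - z' i)"
    by (meson order_trans)
qed

lemma le_mult_INF_add_INF:
  fixes f :: "'a \<Rightarrow> real" and g :: "'b \<Rightarrow> real"
  assumes "K \<ge> 0" "\<And>a. 0 \<le> f a" "\<And>b. 0 \<le> g b" and le: "\<And>a b. x \<le> K * (f a + g b)"
  shows "x \<le> K * ((INF a. f a) + (INF b. g b))"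
proof (cases "K = 0")
  case True with le show ?thesis by simp
next
  case False
  with assms(1) have K: "K > 0" by simp
  have "x / K - (INF a. f a) \<le> (INF b. g b)"
  proof (rule cINF_greatest)
    fix b
    have "x / K - g b \<le> (INF a. f a)"
      by (rule cINF_greatest) (use le[of _ b] K in \<open>auto simp: divide_le_eq algebra_simps\<close>)
    then show "x / K - (INF a. f a) \<le> g b" by linarith
  qed simp
  with K show ?thesis by (simp add: divide_le_eq algebra_simps)
qed

section \<open>Sublinear expectation spaces and independent increments\<close>

locale sle_space =
  fixes H :: "('w \<Rightarrow> real) set" and E :: "('w \<Rightarrow> real) \<Rightarrow> real"
  assumes sle: "sublinear_expectation_space H E"
begin

lemma add_in: "X \<in> H \<Longrightarrow> Y \<in> H \<Longrightarrow> (\<lambda>w. X w + Y w) \<in> H"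
  using sle unfolding sublinear_expectation_space_def by blast

lemma scale_in: "X \<in> H \<Longrightarrow> (\<lambda>w. c * X w) \<in> H"
  using sle unfolding sublinear_expectation_space_def by blast

lemma compose_in:
  fixes m :: nat
  assumes "\<And>i. i < m \<Longrightarrow> X i \<in> H" "cblip {..<m} \<phi>"
  shows "(\<lambda>w. \<phi> (\<lambda>i. X i w)) \<in> H"
proof -
  have "\<forall>(m::nat) X \<phi>. (\<forall>i<m. X i \<in> H) \<and> cblip {..<m} \<phi> \<longrightarrow> (\<lambda>w. \<phi> (\<lambda>i. X i w)) \<in> H"
    using sle unfolding sublinear_expectation_space_def by blast
  from this[rule_format, of m X \<phi>] assms show ?thesis by blast
qed

lemma mono: "X \<in> H \<Longrightarrow> Y \<in> H \<Longrightarrow> (\<And>w. Y w \<le> X w) \<Longrightarrow> E Y \<le> E X"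
  using sle unfolding sublinear_expectation_space_def sublinear_expectation_def by blast

lemma const: "E (\<lambda>_. c) = c"
  using sle unfolding sublinear_expectation_space_def sublinear_expectation_def by blast

lemma subadd: "X \<in> H \<Longrightarrow> Y \<in> H \<Longrightarrow> E (\<lambda>w. X w + Y w) \<le> E X + E Y"
  using sle unfolding sublinear_expectation_space_def sublinear_expectation_def by blast

lemma homog: "l \<ge> 0 \<Longrightarrow> X \<in> H \<Longrightarrow> E (\<lambda>w. l * X w) = l * E X"
  using sle unfolding sublinear_expectation_space_def sublinear_expectation_def by blast

lemma const_in: "(\<lambda>_. c) \<in> H"
proof -
  have "(\<lambda>w. (\<lambda>_. c) (\<lambda>i. (\<lambda>_ _. 0) i w)) \<in> H" by (rule compose_in[of 0]) (auto simp: cblip_const)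
  then show ?thesis by simp
qed

lemma diff_in: "X \<in> H \<Longrightarrow> Y \<in> H \<Longrightarrow> (\<lambda>w. X w - Y w) \<in> H"
  using add_in[of X "\<lambda>w. (-1) * Y w"] scale_in[of Y "-1"] by simp

lemma le_add_const:
  assumes "X \<in> H" "Y \<in> H" "\<And>w. X w \<le> Y w + c"
  shows "E X \<le> E Y + c"
proof -
  have "E X \<le> E (\<lambda>w. Y w + c)" by (rule mono) (use assms in \<open>auto intro: add_in const_in\<close>)
  also have "\<dots> \<le> E Y + E (\<lambda>_. c)" by (rule subadd) (use assms in \<open>auto intro: const_in\<close>)
  finally show ?thesis by (simp add: const)
qed

lemma abs_diff_le:
  assumes "X \<in> H" "Y \<in> H" "\<And>w. \<bar>X w - Y w\<bar> \<le> c"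
  shows "\<bar>E X - E Y\<bar> \<le> c"
proof -
  have "X w \<le> Y w + c" "Y w \<le> X w + c" for w using assms(3)[of w] by linarith+
  then have "E X \<le> E Y + c" "E Y \<le> E X + c" using le_add_const assms(1,2) by blast+
  then show ?thesis by linarith
qed

lemma abs_le: "X \<in> H \<Longrightarrow> (\<And>w. \<bar>X w\<bar> \<le> c) \<Longrightarrow> \<bar>E X\<bar> \<le> c"
  using abs_diff_le[OF _ const_in[of 0]] by (simp add: const)

end

definition increments :: "nat \<Rightarrow> (real \<Rightarrow> 'w \<Rightarrow> nat \<Rightarrow> real) \<Rightarrow> 'w \<Rightarrow> nat \<times> nat \<Rightarrow> real" where
  "increments n P w = (\<lambda>(j, i). incr n P j w i)"

lemma dlt_pos: "dlt n > 0"
  unfolding dlt_def by simp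

lemma rowupd_abs_diff_le: "\<bar>rowupd x r y c - rowupd x' r y c\<bar> \<le> \<bar>x c - x' c\<bar>"
  by (cases c) (auto simp: rowupd_def)

lemma rowupd_row_self: "rowupd x r (\<lambda>i. x (r, i)) = x"
  by (auto simp: rowupd_def)

lemma cblip_rowupd:
  assumes "finite R" "finite J" and G: "cblip (R \<times> J) G"
  shows "cblip J (\<lambda>y. G (rowupd x r y))"
proof (rule cblip_compose[OF _ G, where C = 1])
  fix u u' c assume "c \<in> R \<times> J"
  then show "\<bar>rowupd x r u c - rowupd x r u' c\<bar> \<le> 1 * vnorm J (\<lambda>j. u j - u' j)"
    using abs_le_vnorm[OF \<open>finite J\<close>, of "snd c" "\<lambda>j. u j - u' j"]
    by (cases c) (auto simp: rowupd_def vnorm_nonneg)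
qed (use assms in simp)

text \<open>The path values at times \<open>0, dlt n, \<dots>, k dlt n\<close> (left summand) and the next increment (right
  summand), glued by \<open>case_sum\<close> as in \<open>indep\<close>, determine rows \<open>0..k\<close> of the increment matrix.\<close>
definition increments_of_path :: "nat \<Rightarrow> (nat \<times> nat + nat \<Rightarrow> real) \<Rightarrow> nat \<times> nat \<Rightarrow> real" where
  "increments_of_path k u = (\<lambda>(j, i). if j < k then u (Inl (Suc j, i)) - u (Inl (j, i)) else u (Inr i))"

lemma cblip_increments_of_path:
  assumes G: "cblip ({..<K} \<times> {..<d}) G"
  shows "cblip (({..<Suc k} \<times> {..<d}) <+> {..<d}) (\<lambda>u. G (increments_of_path k u))"
proof (rule cblip_compose[OF _ G, where C = 2])
  define J where "J = ({..<Suc k} \<times> {..<d}) <+> {..<d}"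
  fix u u' :: "(nat \<times> nat) + nat \<Rightarrow> real" and c :: "nat \<times> nat"
  assume "c \<in> {..<K} \<times> {..<d}"
  then obtain j i where c: "c = (j, i)" "i < d" by auto
  have coord: "\<bar>u a - u' a\<bar> \<le> vnorm J (\<lambda>j. u j - u' j)" if "a \<in> J" for a
    using abs_le_vnorm[of J a "\<lambda>j. u j - u' j"] that by (simp add: J_def)
  show "\<bar>increments_of_path k u c - increments_of_path k u' c\<bar> \<le> 2 * vnorm J (\<lambda>j. u j - u' j)"
  proof (cases "j < k")
    case True
    with c have "Inl (Suc j, i) \<in> J" "Inl (j, i) \<in> J" by (auto simp: J_def)
    from True coord[OF this(1)] coord[OF this(2)] show ?thesis
      by (simp add: increments_of_path_def c abs_le_iff)
  next
    case False
    from c have "Inr i \<in> J" by (auto simp: J_def)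
    from False coord[OF this] vnorm_nonneg[of J "\<lambda>j. u j - u' j"] show ?thesis
      by (simp add: increments_of_path_def c)
  qed
qed simp

lemma indep_increments_dyadic:
  assumes "indep_increments E d P"
  shows "indep E ({..<Suc k} \<times> {..<d}) {..<d} (\<lambda>w (j, i). P (real j * dlt n) w i) (incr n P k)"
proof -
  have "\<forall>j<Suc k. real j * dlt n < real (Suc j) * dlt n" using dlt_pos[of n] by simp
  with assms[unfolded indep_increments_def, THEN conjunct2, rule_format, of "Suc k" "\<lambda>j. real j * dlt n"]
  have "indep E ({..<Suc k} \<times> {..<d}) {..<d} (\<lambda>w (j, i). P (real j * dlt n) w i)
      (\<lambda>w i. P (real (Suc k) * dlt n) w i - P (real (Suc k - 1) * dlt n) w i)"
    by simp
  then show ?thesis by (simp add: incr_def[abs_def])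
qed

context sle_space
begin

lemma incr_in: "process_in H d P \<Longrightarrow> i < d \<Longrightarrow> (\<lambda>w. incr n P j w i) \<in> H"
  unfolding incr_def process_in_def using dlt_pos[of n] by (intro diff_in) auto

lemma compose_incr_in: "process_in H d P \<Longrightarrow> cblip {..<d} f \<Longrightarrow> (\<lambda>w. f (incr n P j w)) \<in> H"
  using compose_in[of d "\<lambda>i w. incr n P j w i" f] incr_in by simp

text \<open>Conditioning on the path up to time \<open>k dlt n\<close>: the increment in row \<open>k\<close> can be
  integrated out first, because it is independent from the earlier values of the path, which
  determine the rows before \<open>k\<close>.\<close>
lemma E_increments_integrate_row:
  assumes IP: "indep_increments E d P"
    and G1: "cblip ({..<K} \<times> {..<d}) G1" "depends_on {c. fst c < Suc k \<and> snd c < d} G1"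
    and G0: "\<And>x. G0 x = E (\<lambda>w. G1 (rowupd x k (incr n P k w)))"
  shows "E (\<lambda>w. G1 (increments n P w)) = E (\<lambda>w. G0 (increments n P w))"
proof -
  define V where "V = (\<lambda>w (j, i). P (real j * dlt n) w i)"
  have path: "G1 (increments_of_path k (case_sum (V w) y)) = G1 (rowupd (increments n P w) k y)" for w y
    by (rule depends_onD[OF G1(2)])
      (auto simp: increments_of_path_def V_def rowupd_def increments_def incr_def less_Suc_eq)
  from indep_increments_dyadic[OF IP, of k n] cblip_increments_of_path[OF G1(1), of k]
  have "E (\<lambda>w. G1 (increments_of_path k (case_sum (V w) (incr n P k w))))
      = E (\<lambda>w. E (\<lambda>w'. G1 (increments_of_path k (case_sum (V w) (incr n P k w')))))"
    unfolding indep_def V_def by blast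
  moreover have "incr n P k w = (\<lambda>i. increments n P w (k, i))" for w
    by (simp add: increments_def)
  ultimately show ?thesis by (simp add: path G0 rowupd_row_self)
qed

lemma E_increments_backward:
  assumes IP: "indep_increments E d P"
    and Gc: "\<And>k. k \<le> K \<Longrightarrow> cblip ({..<K} \<times> {..<d}) (G k)"
    and Gd: "\<And>k. k \<le> K \<Longrightarrow> depends_on {c. fst c < k \<and> snd c < d} (G k)"
    and Gr: "\<And>k x. k < K \<Longrightarrow> G k x = E (\<lambda>w. G (Suc k) (rowupd x k (incr n P k w)))"
  shows "E (\<lambda>w. G K (increments n P w)) = G 0 x0"
proof -
  have "E (\<lambda>w. G k (increments n P w)) = G 0 x0" if "k \<le> K" for k
    using that
  proof (induction k)
    case 0
    have "(\<lambda>w. G 0 (increments n P w)) = (\<lambda>_. G 0 x0)"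
      by (rule ext, rule depends_onD[OF Gd]) auto
    then show ?case by (simp add: const)
  next
    case (Suc k)
    have "E (\<lambda>w. G (Suc k) (increments n P w)) = E (\<lambda>w. G k (increments n P w))"
      by (rule E_increments_integrate_row[OF IP Gc Gd Gr]) (use Suc.prems in auto)
    with Suc show ?case by simp
  qed
  then show ?thesis by simp
qed

end

section \<open>The product construction\<close>

definition embed_upper :: "nat \<Rightarrow> (nat \<times> nat \<Rightarrow> real) \<Rightarrow> nat \<times> nat \<Rightarrow> real" where
  "embed_upper d x = (\<lambda>(j, i). if i < d then 0 else x (j, i - d))"

definition upper_block :: "nat \<Rightarrow> (nat \<times> nat \<Rightarrow> real) \<Rightarrow> nat \<times> nat \<Rightarrow> real" where
  "upper_block d z = (\<lambda>(j, i). z (j, i + d))"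

lemma upper_block_embed_upper: "upper_block d (embed_upper d x) = x"
  by (auto simp: upper_block_def embed_upper_def)

lemma cblip_compose_upper_block:
  assumes "finite R" "cblip (R \<times> {..<d}) f"
  shows "cblip (R \<times> {..<2 * d}) (\<lambda>z. f (upper_block d z))"
proof (rule cblip_compose[OF _ assms(2), where C = 1])
  fix u u' :: "nat \<times> nat \<Rightarrow> real" and c assume "c \<in> R \<times> {..<d}"
  then show "\<bar>upper_block d u c - upper_block d u' c\<bar> \<le> 1 * vnorm (R \<times> {..<2 * d}) (\<lambda>j. u j - u' j)"
    using abs_le_vnorm[of "R \<times> {..<2 * d}" "(fst c, snd c + d)" "\<lambda>j. u j - u' j"] assms(1)
    by (auto simp: upper_block_def)
qed (use assms in simp)

lemma cblip_compose_embed_upper: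
  assumes "finite R" "cblip (R \<times> {..<2 * d}) f"
  shows "cblip (R \<times> {..<d}) (\<lambda>x. f (embed_upper d x))"
proof (rule cblip_compose[OF _ assms(2), where C = 1])
  fix u u' :: "nat \<times> nat \<Rightarrow> real" and c assume "c \<in> R \<times> {..<2 * d}"
  then show "\<bar>embed_upper d u c - embed_upper d u' c\<bar> \<le> 1 * vnorm (R \<times> {..<d}) (\<lambda>j. u j - u' j)"
    using abs_le_vnorm[of "R \<times> {..<d}" "(fst c, snd c - d)" "\<lambda>j. u j - u' j"] assms(1)
    by (cases c) (auto simp: embed_upper_def vnorm_nonneg)
qed (use assms in simp)

locale product_construction =
  fixes H1 :: "('a \<Rightarrow> real) set" and E1 :: "('a \<Rightarrow> real) \<Rightarrow> real"
    and H2 :: "('b \<Rightarrow> real) set" and E2 :: "('b \<Rightarrow> real) \<Rightarrow> real"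
    and d n :: nat
    and M :: "real \<Rightarrow> 'a \<Rightarrow> nat \<Rightarrow> real" and N :: "real \<Rightarrow> 'b \<Rightarrow> nat \<Rightarrow> real"
  assumes S1: "sublinear_expectation_space H1 E1"
    and S2: "sublinear_expectation_space H2 E2"
    and PM: "process_in H1 d M" and PN: "process_in H2 d N"
    and IM: "indep_increments E1 d M" and IN: "indep_increments E2 d N"

sublocale product_construction \<subseteq> sle1: sle_space H1 E1 by unfold_locales (rule S1)
sublocale product_construction \<subseteq> sle2: sle_space H2 E2 by unfold_locales (rule S2)

context product_construction
begin

abbreviation "step \<equiv> step1 E1 E2 d M N n"
abbreviation "bw \<equiv> bwd E1 E2 d M N n"
abbreviation "XI \<equiv> {..<(2::nat) ^ n} \<times> {..<2 * d}"
abbreviation "MI \<equiv> {..<(2::nat) ^ n} \<times> {..<d}"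

definition step1_psi :: "nat \<Rightarrow> ((nat \<Rightarrow> real) \<Rightarrow> real) \<Rightarrow> (nat \<Rightarrow> real) \<Rightarrow> real" where
  "step1_psi j f a = E2 (\<lambda>w2. f (\<lambda>i. if i < d then a i else incr n N j w2 (i - d)))"

lemma step_eq: "step j f = E1 (\<lambda>w1. step1_psi j f (incr n M j w1))"
  unfolding step1_def step1_psi_def Let_def ..

lemma N_section_in:
  assumes f: "cblip {..<2 * d} f"
  shows "(\<lambda>w2. f (\<lambda>i. if i < d then a i else incr n N j w2 (i - d))) \<in> H2"
proof -
  have "cblip {..<d} (\<lambda>v. f (\<lambda>i. if i < d then a i else v (i - d)))"
  proof (rule cblip_compose[OF _ f, where C = 1])
    fix u u' :: "nat \<Rightarrow> real" and c assume "c \<in> {..<2 * d}"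
    then show "\<bar>(if c < d then a c else u (c - d)) - (if c < d then a c else u' (c - d))\<bar>
        \<le> 1 * vnorm {..<d} (\<lambda>j. u j - u' j)"
      using abs_le_vnorm[of "{..<d}" "c - d" "\<lambda>j. u j - u' j"] by (auto simp: vnorm_nonneg)
  qed simp
  from sle2.compose_incr_in[OF PN this] show ?thesis by simp
qed

lemma cblip_step1_psi:
  assumes f: "cblip {..<2 * d} f"
  shows "cblip {..<d} (step1_psi j f)"
proof -
  obtain B where B: "\<And>x. \<bar>f x\<bar> \<le> B" using cblip_bounded[OF f] by blast
  obtain L where "L \<ge> 0" and L: "\<And>x y. \<bar>f x - f y\<bar> \<le> L * vnorm {..<2 * d} (\<lambda>i. x i - y i)"
    using cblip_lipschitz[OF f] by blast
  show ?thesis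
  proof (rule cblipI[where B = B and L = "L * real (card {..<2 * d})"])
    fix a show "\<bar>step1_psi j f a\<bar> \<le> B"
      unfolding step1_psi_def by (rule sle2.abs_le[OF N_section_in[OF f] B])
  next
    fix a a' :: "nat \<Rightarrow> real"
    have "\<bar>step1_psi j f a - step1_psi j f a'\<bar>
        \<le> L * (real (card {..<2 * d}) * vnorm {..<d} (\<lambda>i. a i - a' i))"
      unfolding step1_psi_def
    proof (rule sle2.abs_diff_le[OF N_section_in[OF f] N_section_in[OF f]])
      fix w
      let ?u = "\<lambda>i. if i < d then a i else incr n N j w (i - d)"
      let ?u' = "\<lambda>i. if i < d then a' i else incr n N j w (i - d)"
      have "vnorm {..<2 * d} (\<lambda>i. ?u i - ?u' i) \<le> real (card {..<2 * d}) * vnorm {..<d} (\<lambda>i. a i - a' i)"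
        by (rule vnorm_le_card_mult) (auto intro: abs_le_vnorm simp: vnorm_nonneg)
      from mult_left_mono[OF this \<open>L \<ge> 0\<close>] L[of ?u ?u']
      show "\<bar>f ?u - f ?u'\<bar> \<le> L * (real (card {..<2 * d}) * vnorm {..<d} (\<lambda>i. a i - a' i))"
        by linarith
    qed
    then show "\<bar>step1_psi j f a - step1_psi j f a'\<bar> \<le> L * real (card {..<2 * d}) * vnorm {..<d} (\<lambda>i. a i - a' i)"
      by (simp add: mult.assoc)
  qed
qed

lemma step1_psi_in: "cblip {..<2 * d} f \<Longrightarrow> (\<lambda>w1. step1_psi j f (incr n M j w1)) \<in> H1"
  by (rule sle1.compose_incr_in[OF PM cblip_step1_psi])

lemma step_abs_diff_le:
  assumes f: "cblip {..<2 * d} f" and g: "cblip {..<2 * d} g" and "\<And>y. \<bar>f y - g y\<bar> \<le> c"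
  shows "\<bar>step j f - step j g\<bar> \<le> c"
  unfolding step_eq
  by (rule sle1.abs_diff_le[OF step1_psi_in[OF f] step1_psi_in[OF g]], unfold step1_psi_def,
      rule sle2.abs_diff_le[OF N_section_in[OF f] N_section_in[OF g]]) fact

lemma step_const: "step j (\<lambda>_. c) = c"
  unfolding step_eq step1_psi_def by (simp add: sle1.const sle2.const)

lemma step_abs_le: "cblip {..<2 * d} f \<Longrightarrow> (\<And>y. \<bar>f y\<bar> \<le> c) \<Longrightarrow> \<bar>step j f\<bar> \<le> c"
  using step_abs_diff_le[OF _ cblip_const, of f 0 c j] by (simp add: step_const)

lemma step_mono:
  assumes f: "cblip {..<2 * d} f" and g: "cblip {..<2 * d} g" and "\<And>y. f y \<le> g y"
  shows "step j f \<le> step j g"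
  unfolding step_eq
  by (rule sle1.mono[OF step1_psi_in[OF g] step1_psi_in[OF f]], unfold step1_psi_def,
      rule sle2.mono[OF N_section_in[OF g] N_section_in[OF f]]) fact

lemma step_subadd:
  assumes f: "cblip {..<2 * d} f" and g: "cblip {..<2 * d} g"
  shows "step j (\<lambda>y. f y + g y) \<le> step j f + step j g"
proof -
  have "step j (\<lambda>y. f y + g y) \<le> E1 (\<lambda>w. step1_psi j f (incr n M j w) + step1_psi j g (incr n M j w))"
    unfolding step_eq
    by (rule sle1.mono[OF sle1.add_in[OF step1_psi_in[OF f] step1_psi_in[OF g]]
          step1_psi_in[OF cblip_add[OF f g]]], unfold step1_psi_def)
      (rule sle2.subadd[OF N_section_in[OF f] N_section_in[OF g]])
  also have "\<dots> \<le> step j f + step j g"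
    unfolding step_eq by (rule sle1.subadd[OF step1_psi_in[OF f] step1_psi_in[OF g]])
  finally show ?thesis .
qed

lemma step_homog:
  assumes f: "cblip {..<2 * d} f" and "l \<ge> 0"
  shows "step j (\<lambda>y. l * f y) = l * step j f"
proof -
  have "step1_psi j (\<lambda>y. l * f y) a = l * step1_psi j f a" for a
    unfolding step1_psi_def by (rule sle2.homog[OF \<open>l \<ge> 0\<close> N_section_in[OF f]])
  then show ?thesis
    unfolding step_eq by (simp add: sle1.homog[OF \<open>l \<ge> 0\<close> step1_psi_in[OF f]])
qed

lemma step_M_only:
  assumes "depends_on {..<d} f"
  shows "step j f = E1 (\<lambda>w. f (incr n M j w))"
proof -
  have "f (\<lambda>i. if i < d then a i else incr n N j w2 (i - d)) = f a" for a w2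
    by (rule depends_onD[OF assms]) simp
  then show ?thesis unfolding step_eq step1_psi_def by (simp add: sle2.const)
qed

lemma step_N_only:
  assumes "depends_on {i. d \<le> i} f"
  shows "step j f = E2 (\<lambda>w. f (\<lambda>i. if i < d then 0 else incr n N j w (i - d)))"
proof -
  have "step1_psi j f a = E2 (\<lambda>w. f (\<lambda>i. if i < d then 0 else incr n N j w (i - d)))" for a
    unfolding step1_psi_def by (rule arg_cong[where f = E2], rule ext, rule depends_onD[OF assms]) simp
  then show ?thesis unfolding step_eq by (simp add: sle1.const)
qed

lemma cblip_rowupd_XI: "cblip XI G \<Longrightarrow> cblip {..<2 * d} (\<lambda>y. G (rowupd x r y))"
  by (rule cblip_rowupd) auto

lemma bwd_cblip: "cblip XI \<phi> \<Longrightarrow> cblip XI (bw \<phi> m)"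
proof (induction m)
  case 0 then show ?case by simp
next
  case (Suc m)
  then have IH: "cblip XI (bw \<phi> m)" by blast
  obtain B where B: "\<And>x. \<bar>bw \<phi> m x\<bar> \<le> B" using cblip_bounded[OF IH] by blast
  obtain L where "L \<ge> 0" and L: "\<And>x y. \<bar>bw \<phi> m x - bw \<phi> m y\<bar> \<le> L * vnorm XI (\<lambda>i. x i - y i)"
    using cblip_lipschitz[OF IH] by blast
  define r where "r = 2 ^ n - Suc m"
  show ?case
  proof (rule cblipI[where B = B and L = L])
    fix x show "\<bar>bw \<phi> (Suc m) x\<bar> \<le> B"
      by (simp add: r_def[symmetric]) (rule step_abs_le[OF cblip_rowupd_XI[OF IH] B])
  next
    fix x x' :: "nat \<times> nat \<Rightarrow> real"
    have "\<bar>bw \<phi> m (rowupd x r y) - bw \<phi> m (rowupd x' r y)\<bar> \<le> L * vnorm XI (\<lambda>i. x i - x' i)" for y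
    proof -
      have "vnorm XI (\<lambda>c. rowupd x r y c - rowupd x' r y c) \<le> vnorm XI (\<lambda>c. x c - x' c)"
        by (rule vnorm_mono) (rule rowupd_abs_diff_le)
      from L[of "rowupd x r y" "rowupd x' r y"] mult_left_mono[OF this \<open>L \<ge> 0\<close>]
      show ?thesis by linarith
    qed
    then show "\<bar>bw \<phi> (Suc m) x - bw \<phi> (Suc m) x'\<bar> \<le> L * vnorm XI (\<lambda>i. x i - x' i)"
      by (simp add: r_def[symmetric]) (rule step_abs_diff_le[OF cblip_rowupd_XI[OF IH] cblip_rowupd_XI[OF IH]])
  qed
qed

lemma bwd_mono: "cblip XI \<phi> \<Longrightarrow> cblip XI \<phi>' \<Longrightarrow> (\<And>x. \<phi> x \<le> \<phi>' x) \<Longrightarrow> bw \<phi> m x \<le> bw \<phi>' m x"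
proof (induction m arbitrary: x)
  case (Suc m)
  show ?case
    by simp (rule step_mono[OF cblip_rowupd_XI[OF bwd_cblip] cblip_rowupd_XI[OF bwd_cblip]], (rule Suc)+)
qed simp

lemma bwd_const: "bw (\<lambda>_. c) m = (\<lambda>_. c)"
  by (induction m) (simp_all add: step_const)

lemma bwd_subadd:
  assumes f: "cblip XI \<phi>" and g: "cblip XI \<psi>"
  shows "bw (\<lambda>x. \<phi> x + \<psi> x) m x \<le> bw \<phi> m x + bw \<psi> m x"
proof (induction m arbitrary: x)
  case (Suc m)
  define r where "r = 2 ^ n - Suc m"
  have "step r (\<lambda>y. bw (\<lambda>x. \<phi> x + \<psi> x) m (rowupd x r y))
      \<le> step r (\<lambda>y. bw \<phi> m (rowupd x r y) + bw \<psi> m (rowupd x r y))"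
    by (rule step_mono[OF cblip_rowupd_XI[OF bwd_cblip[OF cblip_add[OF f g]]]
          cblip_add[OF cblip_rowupd_XI[OF bwd_cblip[OF f]] cblip_rowupd_XI[OF bwd_cblip[OF g]]]])
      (rule Suc)
  also have "\<dots> \<le> step r (\<lambda>y. bw \<phi> m (rowupd x r y)) + step r (\<lambda>y. bw \<psi> m (rowupd x r y))"
    by (rule step_subadd[OF cblip_rowupd_XI[OF bwd_cblip[OF f]] cblip_rowupd_XI[OF bwd_cblip[OF g]]])
  finally show ?case by (simp add: r_def[symmetric])
qed simp

lemma bwd_homog: "cblip XI \<phi> \<Longrightarrow> l \<ge> 0 \<Longrightarrow> bw (\<lambda>x. l * \<phi> x) m = (\<lambda>x. l * bw \<phi> m x)"
  by (induction m) (simp_all add: step_homog[OF cblip_rowupd_XI[OF bwd_cblip]])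

lemma bwd_depends_on:
  "depends_on S \<phi> \<Longrightarrow> S \<subseteq> {c. fst c < 2 ^ n} \<Longrightarrow> depends_on (S \<inter> {c. fst c < 2 ^ n - m}) (bw \<phi> m)"
proof (induction m)
  case 0 then show ?case by (simp add: Int_absorb2)
next
  case (Suc m)
  then have IH: "depends_on (S \<inter> {c. fst c < 2 ^ n - m}) (bw \<phi> m)" by blast
  show ?case
  proof (rule depends_onI)
    fix x x' :: "nat \<times> nat \<Rightarrow> real"
    assume "\<And>c. c \<in> S \<inter> {c. fst c < 2 ^ n - Suc m} \<Longrightarrow> x c = x' c"
    then have "bw \<phi> m (rowupd x (2 ^ n - Suc m) y) = bw \<phi> m (rowupd x' (2 ^ n - Suc m) y)" for y
      by (intro depends_onD[OF IH]) (auto simp: rowupd_def)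
    then show "bw \<phi> (Suc m) x = bw \<phi> (Suc m) x'" by simp
  qed
qed

lemma bwd_trivial: "depends_on {c. fst c < 2 ^ n - m} \<phi> \<Longrightarrow> bw \<phi> m = \<phi>"
proof (induction m)
  case (Suc m)
  have "{c. fst c < 2 ^ n - Suc m} \<subseteq> {c :: nat \<times> nat. fst c < 2 ^ n - m}" by auto
  with Suc have "bw \<phi> m = \<phi>" by (blast intro: depends_on_mono)
  moreover have "\<phi> (rowupd x (2 ^ n - Suc m) y) = \<phi> x" for x y
    by (rule depends_onD[OF Suc.prems]) (auto simp: rowupd_def)
  ultimately show ?case by (simp add: step_const)
qed simp

lemma bwd_row:
  assumes "k < 2 ^ n"
  shows "bw \<phi> (2 ^ n - k) x = step k (\<lambda>y. bw \<phi> (2 ^ n - Suc k) (rowupd x k y))"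
proof -
  from assms have "2 ^ n - k = Suc (2 ^ n - Suc k)" "2 ^ n - Suc (2 ^ n - Suc k) = k" by auto
  then show ?thesis by (simp only: bwd.simps)
qed

lemma bwd_single_row:
  assumes "r < 2 ^ n" "depends_on {c. fst c \<le> r} \<phi>"
  shows "bw \<phi> (2 ^ n - r) = (\<lambda>x. step r (\<lambda>y. \<phi> (rowupd x r y)))"
proof -
  have "bw \<phi> (2 ^ n - Suc r) = \<phi>"
    by (rule bwd_trivial) (use assms in \<open>simp add: less_Suc_eq_le\<close>)
  with bwd_row[OF assms(1)] show ?thesis by auto
qed

lemma bwd_shift: "bw \<phi> m = bw \<psi> m \<Longrightarrow> bw \<phi> (m + t) = bw \<psi> (m + t)"
  by (induction t) simp_all

lemma incmat_eq: "incmat d M N n \<omega> (j, i) =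
    (if i < d then increments n M (fst \<omega>) (j, i) else increments n N (snd \<omega>) (j, i - d))"
  unfolding incmat_def increments_def incr_def Xproc_def by simp

lemma bwd_depends_on_rows_below:
  assumes "cblip XI \<psi>" "depends_on T \<psi>" "k \<le> 2 ^ n"
  shows "depends_on (T \<inter> XI \<inter> {c. fst c < k}) (bw \<psi> (2 ^ n - k))"
proof -
  have "depends_on ((T \<inter> XI) \<inter> {c. fst c < 2 ^ n - (2 ^ n - k)}) (bw \<psi> (2 ^ n - k))"
    by (rule bwd_depends_on[OF depends_on_Int[OF assms(2) cblip_depends_on[OF assms(1)]]]) auto
  then show ?thesis by (rule depends_on_mono) (use assms(3) in auto)
qed

lemma bwd_M_only:
  assumes c: "cblip XI \<psi>" and dM: "depends_on {c. snd c < d} \<psi>"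
  shows "bw \<psi> (2 ^ n) x0 = E1 (\<lambda>w. \<psi> (increments n M w))"
proof -
  define G where "G = (\<lambda>k. bw \<psi> (2 ^ n - k))"
  have Gd: "depends_on {c. fst c < k \<and> snd c < d} (G k)" if "k \<le> 2 ^ n" for k
    using bwd_depends_on_rows_below[OF c dM that] unfolding G_def by (rule depends_on_mono) auto
  have Gc: "cblip MI (G k)" if "k \<le> 2 ^ n" for k
    unfolding G_def by (rule cblip_change_index[OF _ _ bwd_cblip[OF c] Gd[OF that, unfolded G_def]]) auto
  have Gr: "G k x = E1 (\<lambda>w. G (Suc k) (rowupd x k (incr n M k w)))" if k: "k < 2 ^ n" for k x
  proof -
    have "depends_on {..<d} (\<lambda>y. G (Suc k) (rowupd x k y))"
      by (rule depends_onI, rule depends_onD[OF Gd]) (use k in \<open>auto simp: rowupd_def\<close>)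
    with k show ?thesis by (simp add: G_def bwd_row step_M_only)
  qed
  have "E1 (\<lambda>w. G (2 ^ n) (increments n M w)) = G 0 x0"
    by (rule sle1.E_increments_backward[OF IM Gc Gd Gr]) auto
  then show ?thesis unfolding G_def by simp
qed

lemma bwd_N_only:
  assumes c: "cblip XI \<psi>" and dN: "depends_on {c. d \<le> snd c} \<psi>"
  shows "bw \<psi> (2 ^ n) x0 = E2 (\<lambda>w. \<psi> (embed_upper d (increments n N w)))"
proof -
  define G where "G = (\<lambda>k x. bw \<psi> (2 ^ n - k) (embed_upper d x))"
  have Gd: "depends_on {c. fst c < k \<and> snd c < d} (G k)" if "k \<le> 2 ^ n" for k
    unfolding G_def
  proof (rule depends_onI, rule depends_onD[OF bwd_depends_on_rows_below[OF c dN that]])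
    fix x y :: "nat \<times> nat \<Rightarrow> real" and c
    assume "\<And>c. c \<in> {c. fst c < k \<and> snd c < d} \<Longrightarrow> x c = y c"
      and "c \<in> {c. d \<le> snd c} \<inter> XI \<inter> {c. fst c < k}"
    then show "embed_upper d x c = embed_upper d y c" by (auto simp: embed_upper_def)
  qed
  have Gc: "cblip MI (G k)" for k
    unfolding G_def by (rule cblip_compose_embed_upper[OF _ bwd_cblip[OF c]]) simp
  have Gr: "G k x = E2 (\<lambda>w. G (Suc k) (rowupd x k (incr n N k w)))" if k: "k < 2 ^ n" for k x
  proof -
    have "depends_on {c. d \<le> snd c} (bw \<psi> (2 ^ n - Suc k))"
      using bwd_depends_on_rows_below[OF c dN, of "Suc k"] k by (auto intro: depends_on_mono)
    then have "depends_on {i. d \<le> i} (\<lambda>y. bw \<psi> (2 ^ n - Suc k) (rowupd (embed_upper d x) k y))"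
      by (auto simp: depends_on_def rowupd_def)
    from step_N_only[OF this, of k] k
    have "G k x = E2 (\<lambda>w. bw \<psi> (2 ^ n - Suc k)
        (rowupd (embed_upper d x) k (\<lambda>i. if i < d then 0 else incr n N k w (i - d))))"
      by (simp add: G_def bwd_row)
    also have "(\<lambda>w. rowupd (embed_upper d x) k (\<lambda>i. if i < d then 0 else incr n N k w (i - d)))
        = (\<lambda>w. embed_upper d (rowupd x k (incr n N k w)))"
      by (auto simp: rowupd_def embed_upper_def fun_eq_iff)
    finally show ?thesis by (simp add: G_def)
  qed
  have "E2 (\<lambda>w. G (2 ^ n) (increments n N w)) = G 0 x0"
    by (rule sle2.E_increments_backward[OF IN Gc Gd Gr]) auto
  moreover have "bw \<psi> (2 ^ n) (embed_upper d x0) = bw \<psi> (2 ^ n) x0"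
    using bwd_depends_on_rows_below[OF c dN, of 0] by (simp add: depends_on_def)
  ultimately show ?thesis unfolding G_def by simp
qed

definition penalty_M :: "real \<Rightarrow> real \<Rightarrow> (nat \<times> nat \<Rightarrow> real) \<Rightarrow> real" where
  "penalty_M B K z = min B (K * range_dist MI (increments n M) z)"

definition penalty_N :: "real \<Rightarrow> real \<Rightarrow> (nat \<times> nat \<Rightarrow> real) \<Rightarrow> real" where
  "penalty_N B K z = min B (K * range_dist MI (increments n N) (upper_block d z))"

lemma cblip_penalty_M: "K \<ge> 0 \<Longrightarrow> cblip XI (penalty_M B K)"
  unfolding penalty_M_def
  by (rule cblip_change_index[OF _ _ cblip_truncated_range_dist cblip_depends_on[OF cblip_truncated_range_dist]])
    auto

lemma cblip_penalty_N: "K \<ge> 0 \<Longrightarrow> cblip XI (penalty_N B K)"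
  unfolding penalty_N_def by (rule cblip_compose_upper_block[OF _ cblip_truncated_range_dist]) auto

lemma bwd_penalty_M: "B \<ge> 0 \<Longrightarrow> K \<ge> 0 \<Longrightarrow> bw (penalty_M B K) (2 ^ n) x0 = 0"
proof -
  assume "B \<ge> 0" "K \<ge> 0"
  have "depends_on MI (penalty_M B K)"
    unfolding penalty_M_def by (rule cblip_depends_on[OF cblip_truncated_range_dist[OF \<open>K \<ge> 0\<close>]])
  then have "depends_on {c. snd c < d} (penalty_M B K)" by (rule depends_on_mono) auto
  with bwd_M_only[OF cblip_penalty_M[OF \<open>K \<ge> 0\<close>]] \<open>B \<ge> 0\<close> show ?thesis
    by (simp add: penalty_M_def range_dist_self sle1.const)
qed

lemma bwd_penalty_N: "B \<ge> 0 \<Longrightarrow> K \<ge> 0 \<Longrightarrow> bw (penalty_N B K) (2 ^ n) x0 = 0"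
proof -
  assume "B \<ge> 0" "K \<ge> 0"
  have "depends_on {c. d \<le> snd c} (penalty_N B K)"
    unfolding penalty_N_def upper_block_def by (rule depends_onI) (metis (no_types, lifting) le_add2 mem_Collect_eq snd_conv)
  with bwd_N_only[OF cblip_penalty_N[OF \<open>K \<ge> 0\<close>]] \<open>B \<ge> 0\<close> show ?thesis
    by (simp add: penalty_N_def upper_block_embed_upper range_dist_self sle2.const)
qed

lemma vnorm_diff_incmat_le:
  "vnorm XI (\<lambda>c. z c - incmat d M N n (w1, w2) c) \<le> real (card XI) *
    (vnorm MI (\<lambda>c. z c - increments n M w1 c) + vnorm MI (\<lambda>c. upper_block d z c - increments n N w2 c))"
  (is "_ \<le> _ * (?dM + ?dN)")
proof (rule vnorm_le_card_mult)
  fix c assume "c \<in> XI"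
  then obtain j i where c: "c = (j, i)" "j < 2 ^ n" "i < 2 * d" by auto
  show "\<bar>z c - incmat d M N n (w1, w2) c\<bar> \<le> ?dM + ?dN"
  proof (cases "i < d")
    case True
    with c abs_le_vnorm[of MI c "\<lambda>c. z c - increments n M w1 c"]
      vnorm_nonneg[of MI "\<lambda>c. upper_block d z c - increments n N w2 c"]
    show ?thesis by (simp add: incmat_eq)
  next
    case False
    with c have "(j, i - d) \<in> MI" by auto
    with False c abs_le_vnorm[of MI "(j, i - d)" "\<lambda>c. upper_block d z c - increments n N w2 c"]
      vnorm_nonneg[of MI "\<lambda>c. z c - increments n M w1 c"]
    show ?thesis by (simp add: incmat_eq upper_block_def)
  qed
qed simp

lemma abs_diff_le_range_dist:
  assumes "L \<ge> 0"
    and L: "\<And>x y. \<bar>\<phi> x - \<phi> y\<bar> \<le> L * vnorm XI (\<lambda>i. x i - y i)"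
    and L': "\<And>x y. \<bar>\<phi>' x - \<phi>' y\<bar> \<le> L * vnorm XI (\<lambda>i. x i - y i)"
    and agree: "\<And>\<omega>. \<phi> (incmat d M N n \<omega>) = \<phi>' (incmat d M N n \<omega>)"
  shows "\<bar>\<phi> z - \<phi>' z\<bar> \<le> 2 * L * real (card XI) *
    (range_dist MI (increments n M) z + range_dist MI (increments n N) (upper_block d z))"
  unfolding range_dist_def
proof (rule le_mult_INF_add_INF)
  fix w1 w2
  define r where "r = incmat d M N n (w1, w2)"
  have "\<bar>\<phi> z - \<phi>' z\<bar> \<le> \<bar>\<phi> z - \<phi> r\<bar> + \<bar>\<phi>' r - \<phi>' z\<bar>"
    using agree[of "(w1, w2)"] by (simp add: r_def)
  also have "\<dots> \<le> 2 * (L * vnorm XI (\<lambda>c. z c - r c))"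
    using L[of z r] L'[of r z] vnorm_minus_commute[of XI r z] by simp
  also have "\<dots> \<le> 2 * L * (real (card XI) * (vnorm MI (\<lambda>c. z c - increments n M w1 c)
      + vnorm MI (\<lambda>c. upper_block d z c - increments n N w2 c)))"
    using mult_left_mono[OF vnorm_diff_incmat_le, of "2 * L"] \<open>L \<ge> 0\<close> by (simp add: r_def)
  finally show "\<bar>\<phi> z - \<phi>' z\<bar> \<le> 2 * L * real (card XI) * (vnorm MI (\<lambda>c. z c - increments n M w1 c)
      + vnorm MI (\<lambda>c. upper_block d z c - increments n N w2 c))"
    by (simp only: mult.assoc)
qed (use \<open>L \<ge> 0\<close> in \<open>auto simp: vnorm_nonneg\<close>)

lemma penalties_dominate_diff:
  assumes "L \<ge> 0"
    and B: "\<And>x. \<bar>\<phi> x\<bar> \<le> B" "\<And>x. \<bar>\<phi>' x\<bar> \<le> B"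
    and L: "\<And>x y. \<bar>\<phi> x - \<phi> y\<bar> \<le> L * vnorm XI (\<lambda>i. x i - y i)"
    and L': "\<And>x y. \<bar>\<phi>' x - \<phi>' y\<bar> \<le> L * vnorm XI (\<lambda>i. x i - y i)"
    and agree: "\<And>\<omega>. \<phi> (incmat d M N n \<omega>) = \<phi>' (incmat d M N n \<omega>)"
    and K: "K = 2 * L * real (card XI)"
  shows "\<phi> z \<le> \<phi>' z + (penalty_M (2 * B) K z + penalty_N (2 * B) K z)"
proof -
  let ?dM = "range_dist MI (increments n M) z"
  let ?dN = "range_dist MI (increments n N) (upper_block d z)"
  have "\<bar>\<phi> z - \<phi>' z\<bar> \<le> K * ?dM + K * ?dN"
    using abs_diff_le_range_dist[OF \<open>L \<ge> 0\<close> L L' agree, of z] by (simp add: K distrib_left)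
  moreover have "\<bar>\<phi> z - \<phi>' z\<bar> \<le> 2 * B" using B(1)[of z] B(2)[of z] by simp
  moreover have "0 \<le> K * ?dM" "0 \<le> K * ?dN"
    using \<open>L \<ge> 0\<close> by (simp_all add: K range_dist_nonneg)
  ultimately show ?thesis unfolding penalty_M_def penalty_N_def by linarith
qed

lemma cblip_common_bounds:
  assumes "cblip I f" "cblip I g"
  obtains B L where "L \<ge> 0" "\<And>x. \<bar>f x\<bar> \<le> B" "\<And>x. \<bar>g x\<bar> \<le> B"
    "\<And>x y. \<bar>f x - f y\<bar> \<le> L * vnorm I (\<lambda>i. x i - y i)"
    "\<And>x y. \<bar>g x - g y\<bar> \<le> L * vnorm I (\<lambda>i. x i - y i)"
proof -
  obtain B1 where B1: "\<And>x. \<bar>f x\<bar> \<le> B1" using cblip_bounded[OF assms(1)] by blast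
  obtain B2 where B2: "\<And>x. \<bar>g x\<bar> \<le> B2" using cblip_bounded[OF assms(2)] by blast
  obtain L1 where "L1 \<ge> 0" and L1: "\<And>x y. \<bar>f x - f y\<bar> \<le> L1 * vnorm I (\<lambda>i. x i - y i)"
    using cblip_lipschitz[OF assms(1)] by blast
  obtain L2 where "L2 \<ge> 0" and L2: "\<And>x y. \<bar>g x - g y\<bar> \<le> L2 * vnorm I (\<lambda>i. x i - y i)"
    using cblip_lipschitz[OF assms(2)] by blast
  have "L1 * v \<le> (L1 + L2) * v" "L2 * v \<le> (L1 + L2) * v" if "v \<ge> 0" for v :: real
    using that \<open>L1 \<ge> 0\<close> \<open>L2 \<ge> 0\<close> by (simp_all add: distrib_right)
  with L1 L2 vnorm_nonneg have
    "\<bar>f x - f y\<bar> \<le> (L1 + L2) * vnorm I (\<lambda>i. x i - y i)" "\<bar>g x - g y\<bar> \<le> (L1 + L2) * vnorm I (\<lambda>i. x i - y i)"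
    for x y by (meson order_trans)+
  moreover have "\<bar>f x\<bar> \<le> B1 + B2" "\<bar>g x\<bar> \<le> B1 + B2" for x
    using B1[of x] B2[of x] B1[of undefined] B2[of undefined] by linarith+
  ultimately show ?thesis using \<open>L1 \<ge> 0\<close> \<open>L2 \<ge> 0\<close> by (intro that[of "L1 + L2" "B1 + B2"]) simp_all
qed

lemma bwd_le_of_agree:
  assumes c: "cblip XI \<phi>" and c': "cblip XI \<phi>'"
    and agree: "\<And>\<omega>. \<phi> (incmat d M N n \<omega>) = \<phi>' (incmat d M N n \<omega>)"
  shows "bw \<phi> (2 ^ n) x0 \<le> bw \<phi>' (2 ^ n) x0"
proof -
  obtain L B where "L \<ge> 0" and B: "\<And>x. \<bar>\<phi> x\<bar> \<le> B" "\<And>x. \<bar>\<phi>' x\<bar> \<le> B"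
    and L: "\<And>x y. \<bar>\<phi> x - \<phi> y\<bar> \<le> L * vnorm XI (\<lambda>i. x i - y i)"
    and L': "\<And>x y. \<bar>\<phi>' x - \<phi>' y\<bar> \<le> L * vnorm XI (\<lambda>i. x i - y i)"
    by (rule cblip_common_bounds[OF c c']) blast
  define K where "K = 2 * L * real (card XI)"
  have "0 \<le> 2 * B" "K \<ge> 0" using B(1)[of undefined] \<open>L \<ge> 0\<close> by (auto simp: K_def)
  let ?P = "\<lambda>z. penalty_M (2 * B) K z + penalty_N (2 * B) K z"
  have cM: "cblip XI (penalty_M (2 * B) K)" and cN: "cblip XI (penalty_N (2 * B) K)"
    by (rule cblip_penalty_M[OF \<open>K \<ge> 0\<close>], rule cblip_penalty_N[OF \<open>K \<ge> 0\<close>])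
  have "bw \<phi> (2 ^ n) x0 \<le> bw (\<lambda>z. \<phi>' z + ?P z) (2 ^ n) x0"
    by (rule bwd_mono[OF c cblip_add[OF c' cblip_add[OF cM cN]]])
      (rule penalties_dominate_diff[OF \<open>L \<ge> 0\<close> B L L' agree K_def])
  also have "\<dots> \<le> bw \<phi>' (2 ^ n) x0 + bw ?P (2 ^ n) x0"
    by (rule bwd_subadd[OF c' cblip_add[OF cM cN]])
  also have "bw ?P (2 ^ n) x0 \<le> bw (penalty_M (2 * B) K) (2 ^ n) x0 + bw (penalty_N (2 * B) K) (2 ^ n) x0"
    by (rule bwd_subadd[OF cM cN])
  finally show ?thesis
    by (simp add: bwd_penalty_M[OF \<open>0 \<le> 2 * B\<close> \<open>K \<ge> 0\<close>] bwd_penalty_N[OF \<open>0 \<le> 2 * B\<close> \<open>K \<ge> 0\<close>])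
qed

lemma bwd_eq_of_agree:
  "cblip XI \<phi> \<Longrightarrow> cblip XI \<phi>' \<Longrightarrow> (\<And>\<omega>. \<phi> (incmat d M N n \<omega>) = \<phi>' (incmat d M N n \<omega>)) \<Longrightarrow>
    bw \<phi> (2 ^ n) x0 = bw \<phi>' (2 ^ n) x0"
  by (rule antisym; rule bwd_le_of_agree) auto

text \<open>\<open>E_n\<close> evaluates a representative chosen by \<open>SOME\<close>; by \<open>bwd_eq_of_agree\<close> the choice does not matter.\<close>
lemma E_n_eq_bwd:
  assumes c: "cblip XI \<phi>" and \<xi>: "\<xi> = (\<lambda>\<omega>. \<phi> (incmat d M N n \<omega>))"
  shows "E_n E1 E2 d M N n \<xi> = bw \<phi> (2 ^ n) (\<lambda>_. 0)"
proof -
  define \<phi>0 where "\<phi>0 = (SOME \<phi>. cblip XI \<phi> \<and> \<xi> = (\<lambda>\<omega>. \<phi> (incmat d M N n \<omega>)))"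
  have "cblip XI \<phi>0 \<and> \<xi> = (\<lambda>\<omega>. \<phi>0 (incmat d M N n \<omega>))"
    unfolding \<phi>0_def by (rule someI[where x = \<phi>]) (use c \<xi> in auto)
  then have "cblip XI \<phi>0" and "(\<lambda>\<omega>. \<phi>0 (incmat d M N n \<omega>)) = (\<lambda>\<omega>. \<phi> (incmat d M N n \<omega>))"
    using \<xi> by auto
  then have "cblip XI \<phi>0" "\<phi>0 (incmat d M N n \<omega>) = \<phi> (incmat d M N n \<omega>)" for \<omega>
    by (auto dest: fun_cong)
  then have "bw \<phi>0 (2 ^ n) (\<lambda>_. 0) = bw \<phi> (2 ^ n) (\<lambda>_. 0)"
    using bwd_eq_of_agree[OF _ c] by blast
  then show ?thesis unfolding E_n_def val_n_def \<phi>0_def .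
qed

lemma H_nI: "cblip XI \<phi> \<Longrightarrow> (\<lambda>\<omega>. \<phi> (incmat d M N n \<omega>)) \<in> H_n d M N n"
  unfolding H_n_def by blast

lemma H_nE:
  assumes "\<xi> \<in> H_n d M N n"
  obtains \<phi> where "cblip XI \<phi>" "\<xi> = (\<lambda>\<omega>. \<phi> (incmat d M N n \<omega>))"
  using assms unfolding H_n_def by blast

lemma H_n_compose_in:
  fixes m :: nat
  assumes X: "\<And>i. i < m \<Longrightarrow> X i \<in> H_n d M N n" and \<psi>: "cblip {..<m} \<psi>"
  shows "(\<lambda>\<omega>. \<psi> (\<lambda>i. X i \<omega>)) \<in> H_n d M N n"
proof -
  have "\<forall>i\<in>{..<m}. \<exists>F. cblip XI F \<and> X i = (\<lambda>\<omega>. F (incmat d M N n \<omega>))"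
    using X by (blast elim: H_nE)
  from bchoice[OF this] obtain F
    where "\<forall>i\<in>{..<m}. cblip XI (F i) \<and> X i = (\<lambda>\<omega>. F i (incmat d M N n \<omega>))" ..
  then have F: "\<And>i. i < m \<Longrightarrow> cblip XI (F i)"
    and X_eq: "\<And>i. i < m \<Longrightarrow> X i = (\<lambda>\<omega>. F i (incmat d M N n \<omega>))" by auto
  have "(\<lambda>\<omega>. \<psi> (\<lambda>i. X i \<omega>)) = (\<lambda>\<omega>. \<psi> (\<lambda>i. F i (incmat d M N n \<omega>)))"
    by (rule ext, rule depends_onD[OF cblip_depends_on[OF \<psi>]]) (simp add: X_eq)
  also have "\<dots> \<in> H_n d M N n"
    by (rule H_nI, rule cblip_compose_family[OF _ \<psi>]) (auto simp: F)
  finally show ?thesis .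
qed

lemma E_n_sublinear_expectation: "sublinear_expectation (H_n d M N n) (E_n E1 E2 d M N n)"
  unfolding sublinear_expectation_def
proof (intro conjI allI ballI impI)
  fix X Y assume X: "X \<in> H_n d M N n" and Y: "Y \<in> H_n d M N n" and le: "\<forall>w. Y w \<le> X w"
  obtain f where f: "cblip XI f" "X = (\<lambda>\<omega>. f (incmat d M N n \<omega>))" using X by (rule H_nE)
  obtain g where g: "cblip XI g" "Y = (\<lambda>\<omega>. g (incmat d M N n \<omega>))" using Y by (rule H_nE)
  \<comment> \<open>\<open>g \<le> f\<close> need not hold off the range of the increments, but \<open>min g f \<le> f\<close> does\<close>
  from le f g have "Y = (\<lambda>\<omega>. min (g (incmat d M N n \<omega>)) (f (incmat d M N n \<omega>)))"
    by (auto simp: fun_eq_iff min_def)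
  then have "E_n E1 E2 d M N n Y = bw (\<lambda>z. min (g z) (f z)) (2 ^ n) (\<lambda>_. 0)"
    by (rule E_n_eq_bwd[OF cblip_min[OF g(1) f(1)]])
  also have "\<dots> \<le> bw f (2 ^ n) (\<lambda>_. 0)" by (rule bwd_mono[OF cblip_min[OF g(1) f(1)] f(1)]) simp
  finally show "E_n E1 E2 d M N n Y \<le> E_n E1 E2 d M N n X" by (simp add: E_n_eq_bwd[OF f])
next
  fix c :: real
  show "E_n E1 E2 d M N n (\<lambda>_. c) = c"
  proof -
    have "E_n E1 E2 d M N n (\<lambda>_. c) = bw (\<lambda>_. c) (2 ^ n) (\<lambda>_. 0)"
      by (rule E_n_eq_bwd[OF cblip_const]) simp
    then show ?thesis by (simp add: bwd_const)
  qed
next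
  fix X Y assume X: "X \<in> H_n d M N n" and Y: "Y \<in> H_n d M N n"
  obtain f where f: "cblip XI f" "X = (\<lambda>\<omega>. f (incmat d M N n \<omega>))" using X by (rule H_nE)
  obtain g where g: "cblip XI g" "Y = (\<lambda>\<omega>. g (incmat d M N n \<omega>))" using Y by (rule H_nE)
  have "E_n E1 E2 d M N n (\<lambda>w. X w + Y w) = bw (\<lambda>z. f z + g z) (2 ^ n) (\<lambda>_. 0)"
    by (rule E_n_eq_bwd[OF cblip_add[OF f(1) g(1)]]) (simp add: f g)
  also have "\<dots> \<le> bw f (2 ^ n) (\<lambda>_. 0) + bw g (2 ^ n) (\<lambda>_. 0)" by (rule bwd_subadd[OF f(1) g(1)])
  finally show "E_n E1 E2 d M N n (\<lambda>w. X w + Y w) \<le> E_n E1 E2 d M N n X + E_n E1 E2 d M N n Y"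
    by (simp add: E_n_eq_bwd[OF f] E_n_eq_bwd[OF g])
next
  fix l :: real and X assume "0 \<le> l" and X: "X \<in> H_n d M N n"
  obtain f where f: "cblip XI f" "X = (\<lambda>\<omega>. f (incmat d M N n \<omega>))" using X by (rule H_nE)
  have "E_n E1 E2 d M N n (\<lambda>w. l * X w) = bw (\<lambda>z. l * f z) (2 ^ n) (\<lambda>_. 0)"
    by (rule E_n_eq_bwd[OF cblip_scale[OF f(1)]]) (simp add: f)
  then show "E_n E1 E2 d M N n (\<lambda>w. l * X w) = l * E_n E1 E2 d M N n X"
    by (simp add: bwd_homog[OF f(1) \<open>0 \<le> l\<close>] E_n_eq_bwd[OF f])
qed

lemma E_n_sublinear_expectation_space:
  "sublinear_expectation_space (H_n d M N n) (E_n E1 E2 d M N n)"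
proof -
  have zero: "(\<lambda>_. 0) \<in> H_n d M N n" using H_nI[OF cblip_const] by simp
  have add: "\<forall>X\<in>H_n d M N n. \<forall>Y\<in>H_n d M N n. (\<lambda>w. X w + Y w) \<in> H_n d M N n"
  proof (intro ballI)
    fix X Y assume "X \<in> H_n d M N n" "Y \<in> H_n d M N n"
    then obtain f g where f: "cblip XI f" "X = (\<lambda>\<omega>. f (incmat d M N n \<omega>))"
      and g: "cblip XI g" "Y = (\<lambda>\<omega>. g (incmat d M N n \<omega>))" by (elim H_nE)
    show "(\<lambda>w. X w + Y w) \<in> H_n d M N n"
      unfolding f(2) g(2) by (rule H_nI[OF cblip_add[OF f(1) g(1)]])
  qed
  have scale: "\<forall>c::real. \<forall>X\<in>H_n d M N n. (\<lambda>w. c * X w) \<in> H_n d M N n"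
  proof (intro allI ballI)
    fix c :: real and X assume "X \<in> H_n d M N n"
    then obtain f where f: "cblip XI f" "X = (\<lambda>\<omega>. f (incmat d M N n \<omega>))" by (elim H_nE)
    show "(\<lambda>w. c * X w) \<in> H_n d M N n" unfolding f(2) by (rule H_nI[OF cblip_scale[OF f(1)]])
  qed
  have compose: "\<forall>(m::nat) X \<psi>. (\<forall>i<m. X i \<in> H_n d M N n) \<and> cblip {..<m} \<psi> \<longrightarrow>
      (\<lambda>w. \<psi> (\<lambda>i. X i w)) \<in> H_n d M N n"
  proof (intro allI impI)
    fix m :: nat and X :: "nat \<Rightarrow> 'a \<times> 'b \<Rightarrow> real" and \<psi>
    assume "(\<forall>i<m. X i \<in> H_n d M N n) \<and> cblip {..<m} \<psi>"
    then have "\<And>i. i < m \<Longrightarrow> X i \<in> H_n d M N n" "cblip {..<m} \<psi>" by auto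
    then show "(\<lambda>w. \<psi> (\<lambda>i. X i w)) \<in> H_n d M N n" by (rule H_n_compose_in)
  qed
  show ?thesis
    unfolding sublinear_expectation_space_def
    by (intro conjI zero add scale compose E_n_sublinear_expectation)
qed

abbreviation "prefix_index j \<equiv> ({..<j} \<times> {..<2 * d}) <+> {..<(2::nat) * d}"

lemma cblip_prefix_with_row:
  assumes "j < 2 ^ n" "cblip (prefix_index j) \<phi>"
  shows "cblip XI (\<lambda>z. \<phi> (case_sum z (\<lambda>i. z (j, i))))"
proof (rule cblip_compose[OF _ assms(2), where C = 1])
  fix u u' :: "nat \<times> nat \<Rightarrow> real" and c assume "c \<in> prefix_index j"
  with assms(1) show "\<bar>case_sum u (\<lambda>i. u (j, i)) c - case_sum u' (\<lambda>i. u' (j, i)) c\<bar>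
      \<le> 1 * vnorm XI (\<lambda>c. u c - u' c)"
    by (auto intro!: abs_le_vnorm[of XI _ "\<lambda>c. u c - u' c", simplified])
qed simp

lemma cblip_fixed_prefix_with_row:
  assumes "j < 2 ^ n" "cblip (prefix_index j) \<phi>"
  shows "cblip XI (\<lambda>z. \<phi> (case_sum a (\<lambda>i. z (j, i))))"
proof (rule cblip_compose[OF _ assms(2), where C = 1])
  fix u u' :: "nat \<times> nat \<Rightarrow> real" and c assume "c \<in> prefix_index j"
  with assms(1) show "\<bar>case_sum a (\<lambda>i. u (j, i)) c - case_sum a (\<lambda>i. u' (j, i)) c\<bar>
      \<le> 1 * vnorm XI (\<lambda>c. u c - u' c)"
    by (auto simp: vnorm_nonneg intro!: abs_le_vnorm[of XI _ "\<lambda>c. u c - u' c", simplified])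
qed simp

lemma bwd_prefix_with_row:
  assumes "j < 2 ^ n" "cblip (prefix_index j) \<phi>"
  shows "bw (\<lambda>z. \<phi> (case_sum z (\<lambda>i. z (j, i)))) (2 ^ n - j) = (\<lambda>x. step j (\<lambda>y. \<phi> (case_sum x y)))"
proof -
  note dJ = cblip_depends_on[OF assms(2)]
  have "depends_on {c. fst c \<le> j} (\<lambda>z. \<phi> (case_sum z (\<lambda>i. z (j, i))))"
    by (rule depends_onI, rule depends_onD[OF dJ]) auto
  moreover have "\<phi> (case_sum (rowupd x j y) (\<lambda>i. rowupd x j y (j, i))) = \<phi> (case_sum x y)" for x y
    by (rule depends_onD[OF dJ]) (auto simp: rowupd_def)
  ultimately show ?thesis by (simp add: bwd_single_row[OF assms(1)])
qed

lemma bwd_step_prefix: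
  assumes "j < 2 ^ n" "cblip (prefix_index j) \<phi>"
  shows "bw (\<lambda>x. step j (\<lambda>y. \<phi> (case_sum x y))) (2 ^ n - j) = (\<lambda>x. step j (\<lambda>y. \<phi> (case_sum x y)))"
proof (rule bwd_trivial, rule depends_onI)
  fix x x' :: "nat \<times> nat \<Rightarrow> real"
  assume "\<And>c. c \<in> {c. fst c < 2 ^ n - (2 ^ n - j)} \<Longrightarrow> x c = x' c"
  with assms(1) have "\<phi> (case_sum x y) = \<phi> (case_sum x' y)" for y
    by (intro depends_onD[OF cblip_depends_on[OF assms(2)]]) auto
  then show "step j (\<lambda>y. \<phi> (case_sum x y)) = step j (\<lambda>y. \<phi> (case_sum x' y))" by simp
qed

lemma bwd_fixed_prefix_with_row:
  assumes "j < 2 ^ n"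
  shows "bw (\<lambda>z. \<phi> (case_sum a (\<lambda>i. z (j, i)))) (2 ^ n) = (\<lambda>_. step j (\<lambda>y. \<phi> (case_sum a y)))"
proof -
  have "depends_on {c. fst c \<le> j} (\<lambda>z. \<phi> (case_sum a (\<lambda>i. z (j, i))))"
    by (rule depends_onI) simp
  then have "bw (\<lambda>z. \<phi> (case_sum a (\<lambda>i. z (j, i)))) (2 ^ n - j)
      = bw (\<lambda>_. step j (\<lambda>y. \<phi> (case_sum a y))) (2 ^ n - j)"
    by (simp add: bwd_single_row[OF assms] bwd_const rowupd_def)
  from bwd_shift[OF this, of j] assms show ?thesis by (simp add: bwd_const)
qed

lemma E_n_indep:
  assumes "1 \<le> j" "j < 2 ^ n"
  shows "indep (E_n E1 E2 d M N n) ({..<j} \<times> {..<2 * d}) {..<2 * d}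
    (\<lambda>\<omega> (r, i). incr n (Xproc d M N) r \<omega> i) (\<lambda>\<omega> i. incr n (Xproc d M N) j \<omega> i)"
  unfolding indep_def
proof (intro allI impI)
  fix \<phi> :: "(nat \<times> nat + nat \<Rightarrow> real) \<Rightarrow> real"
  assume c: "cblip (prefix_index j) \<phi>"
  define G where "G = (\<lambda>x. step j (\<lambda>y. \<phi> (case_sum x y)))"
  have G_eq: "bw (\<lambda>z. \<phi> (case_sum z (\<lambda>i. z (j, i)))) (2 ^ n) = bw G (2 ^ n)"
    using bwd_shift[OF trans[OF bwd_prefix_with_row[OF assms(2) c] bwd_step_prefix[OF assms(2) c, symmetric]], of j]
      assms(2) by (simp add: G_def)
  have cG: "cblip XI G"
    using bwd_cblip[OF cblip_prefix_with_row[OF assms(2) c], of "2 ^ n - j"]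
    by (simp add: bwd_prefix_with_row[OF assms(2) c] G_def)
  have incmat: "(\<lambda>(r, i). incr n (Xproc d M N) r \<omega> i) = incmat d M N n \<omega>" for \<omega>
    by (simp add: incmat_def)
  have inner: "E_n E1 E2 d M N n (\<lambda>\<omega>'. \<phi> (case_sum (incmat d M N n \<omega>) (\<lambda>i. incr n (Xproc d M N) j \<omega>' i)))
      = G (incmat d M N n \<omega>)" for \<omega>
    using E_n_eq_bwd[OF cblip_fixed_prefix_with_row[OF assms(2) c], of _ "incmat d M N n \<omega>"]
    by (simp add: incmat_def bwd_fixed_prefix_with_row[OF assms(2)] G_def)
  have outer: "E_n E1 E2 d M N n (\<lambda>\<omega>. \<phi> (case_sum (incmat d M N n \<omega>) (\<lambda>i. incr n (Xproc d M N) j \<omega> i)))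
      = bw G (2 ^ n) (\<lambda>_. 0)"
    by (simp add: E_n_eq_bwd[OF cblip_prefix_with_row[OF assms(2) c]] incmat_def G_eq[symmetric])
  show "E_n E1 E2 d M N n (\<lambda>w. \<phi> (case_sum ((\<lambda>\<omega> (r, i). incr n (Xproc d M N) r \<omega> i) w)
        ((\<lambda>\<omega> i. incr n (Xproc d M N) j \<omega> i) w)))
    = E_n E1 E2 d M N n (\<lambda>w. E_n E1 E2 d M N n (\<lambda>w'. \<phi> (case_sum ((\<lambda>\<omega> (r, i). incr n (Xproc d M N) r \<omega> i) w)
        ((\<lambda>\<omega> i. incr n (Xproc d M N) j \<omega> i) w'))))"
    by (simp add: incmat inner outer E_n_eq_bwd[OF cG])
qed

lemma E_n_Mtil:
  assumes c: "cblip MI \<phi>"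
  shows "E_n E1 E2 d M N n (\<lambda>\<omega>. \<phi> (\<lambda>(j, i). incr n (Mtil M) j \<omega> i)) = E1 (\<lambda>w. \<phi> (\<lambda>(j, i). incr n M j w i))"
proof -
  have cXI: "cblip XI \<phi>" by (rule cblip_change_index[OF _ _ c cblip_depends_on[OF c]]) auto
  have "(\<lambda>\<omega>. \<phi> (\<lambda>(j, i). incr n (Mtil M) j \<omega> i)) = (\<lambda>\<omega>. \<phi> (incmat d M N n \<omega>))"
    by (rule ext, rule depends_onD[OF cblip_depends_on[OF c]])
      (auto simp: incmat_eq increments_def incr_def Mtil_def)
  then have "E_n E1 E2 d M N n (\<lambda>\<omega>. \<phi> (\<lambda>(j, i). incr n (Mtil M) j \<omega> i)) = bw \<phi> (2 ^ n) (\<lambda>_. 0)"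
    by (rule E_n_eq_bwd[OF cXI])
  also have "\<dots> = E1 (\<lambda>w. \<phi> (increments n M w))"
    by (rule bwd_M_only[OF cXI depends_on_mono[OF cblip_depends_on[OF c]]]) auto
  finally show ?thesis by (simp add: increments_def)
qed

lemma E_n_Ntil:
  assumes c: "cblip MI \<phi>"
  shows "E_n E1 E2 d M N n (\<lambda>\<omega>. \<phi> (\<lambda>(j, i). incr n (Ntil N) j \<omega> i)) = E2 (\<lambda>w. \<phi> (\<lambda>(j, i). incr n N j w i))"
proof -
  define \<Psi> where "\<Psi> = (\<lambda>z. \<phi> (upper_block d z))"
  have cXI: "cblip XI \<Psi>" unfolding \<Psi>_def by (rule cblip_compose_upper_block[OF _ c]) simp
  have dN: "depends_on {c. d \<le> snd c} \<Psi>"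
    unfolding \<Psi>_def upper_block_def by (auto intro!: depends_onI arg_cong[where f = \<phi>])
  have "(\<lambda>\<omega>. \<phi> (\<lambda>(j, i). incr n (Ntil N) j \<omega> i)) = (\<lambda>\<omega>. \<Psi> (incmat d M N n \<omega>))"
    by (auto simp: \<Psi>_def upper_block_def incmat_eq increments_def incr_def Ntil_def fun_eq_iff
        intro!: arg_cong[where f = \<phi>])
  then have "E_n E1 E2 d M N n (\<lambda>\<omega>. \<phi> (\<lambda>(j, i). incr n (Ntil N) j \<omega> i)) = bw \<Psi> (2 ^ n) (\<lambda>_. 0)"
    by (rule E_n_eq_bwd[OF cXI])
  also have "\<dots> = E2 (\<lambda>w. \<phi> (increments n N w))"
    by (simp only: bwd_N_only[OF cXI dN]) (simp add: \<Psi>_def upper_block_embed_upper)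
  finally show ?thesis by (simp add: increments_def)
qed

end

theorem lemma3p2:
  fixes H1 :: "('a \<Rightarrow> real) set" and E1 :: "('a \<Rightarrow> real) \<Rightarrow> real"
    and H2 :: "('b \<Rightarrow> real) set" and E2 :: "('b \<Rightarrow> real) \<Rightarrow> real"
    and d n :: nat
    and M :: "real \<Rightarrow> 'a \<Rightarrow> nat \<Rightarrow> real" and N :: "real \<Rightarrow> 'b \<Rightarrow> nat \<Rightarrow> real"
  assumes S1: "sublinear_expectation_space H1 E1"
    and S2: "sublinear_expectation_space H2 E2"
    and PM: "process_in H1 d M" and PN: "process_in H2 d N"
    and IM: "indep_increments E1 d M" and IN: "indep_increments E2 d N"
    and A: "condition_A H1 E1 H2 E2 d M N"
    and n: "n \<ge> 1"
  shows
    \<comment> \<open>E^n is well defined: phi_0 depends only on the random variable phi(increments)\<close>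
    "(\<forall>\<phi> \<phi>'. cblip ({..<2 ^ n} \<times> {..<2 * d}) \<phi> \<and> cblip ({..<2 ^ n} \<times> {..<2 * d}) \<phi>' \<and>
        (\<forall>\<omega>. \<phi> (incmat d M N n \<omega>) = \<phi>' (incmat d M N n \<omega>)) \<longrightarrow>
        val_n E1 E2 d M N n \<phi> = val_n E1 E2 d M N n \<phi>')
   \<and> sublinear_expectation_space (H_n d M N n) (E_n E1 E2 d M N n)
   \<and> (\<forall>j. 1 \<le> j \<and> j < 2 ^ n \<longrightarrow>
        indep (E_n E1 E2 d M N n) ({..<j} \<times> {..<2 * d}) {..<2 * d}
          (\<lambda>\<omega> (r, i). incr n (Xproc d M N) r \<omega> i) (\<lambda>\<omega> i. incr n (Xproc d M N) j \<omega> i))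
   \<and> (\<forall>\<phi>. cblip ({..<2 ^ n} \<times> {..<d}) \<phi> \<longrightarrow>
        E_n E1 E2 d M N n (\<lambda>\<omega>. \<phi> (\<lambda>(j, i). incr n (Mtil M) j \<omega> i))
        = E1 (\<lambda>w. \<phi> (\<lambda>(j, i). incr n M j w i)))
   \<and> (\<forall>\<phi>. cblip ({..<2 ^ n} \<times> {..<d}) \<phi> \<longrightarrow>
        E_n E1 E2 d M N n (\<lambda>\<omega>. \<phi> (\<lambda>(j, i). incr n (Ntil N) j \<omega> i))
        = E2 (\<lambda>w. \<phi> (\<lambda>(j, i). incr n N j w i)))"
proof -
  interpret product_construction H1 E1 H2 E2 d n M N
    by (rule product_construction.intro) fact+
  show ?thesis
    unfolding val_n_def
    by (intro conjI allI impI E_n_sublinear_expectation_space; (elim conjE)?)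
      (auto intro: bwd_eq_of_agree E_n_indep E_n_Mtil E_n_Ntil)
qed

end
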